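(* Consider FedProx, as described in the context, and a round $t$ whose step size satisfies $\gamma_t\le\min\{\frac1{2L},\frac1{\alpha+\mu}\}$. Assume that the bounded variance, bounded stochastic gradient norm, $L$-smoothness and $\mu$-strong convexity assumptions hold. Then $$\mathbb{E}\|\overline{\mathbf{w}}_{t+1,0}-\mathbf{w}_\star\|^2\le\kappa\,\mathbb{E}\|\overline{\mathbf{w}}_{t,0}-\mathbf{w}_\star\|^2+A,$$ where $$\kappa=\frac{\alpha+\mu(1-\gamma_t(\alpha+\mu))^E}{\alpha+\mu}\le1-\gamma_t\mu$$ and $$A=\gamma_t^2E\sigma^2\sum_ip_i^2+6\gamma_t^2LE\Gamma+8\gamma_t^2E^3G^2.$$
   Context: Setting: there are $C$ clients with weights $p_i\ge0$ satisfying $\sum_ip_i=1$, local objectives $F_i:\mathbb{R}^D\to\mathbb{R}$, and global objective $F=\sum_ip_iF_i$. FedProx with $\alpha>0$, $E\ge1$ local steps and step sizes $\gamma_t$, with all clients participating: in round $t$, $\mathbf{w}^i_{t,0}=\overline{\mathbf{w}}_{t,0}$ and $$\mathbf{w}^i_{t,k+1}=(1-\alpha\gamma_t)\mathbf{w}^i_{t,k}+\alpha\gamma_t\overline{\mathbf{w}}_{t,0}-\gamma_tg_i(\mathbf{w}^i_{t,k})\quad(k=0,\dots,E-1),$$ with stochastic gradients $g_i$ of $F_i$ sampled independently across clients and steps given the past. Also $\overline{\mathbf{w}}_{t,k}=\sum_ip_i\mathbf{w}^i_{t,k}$ and $\overline{\mathbf{w}}_{t+1,0}=\overline{\mathbf{w}}_{t,E}$.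 Assumptions: - Unbiasedness: $\mathbb{E}\,g_i(\mathbf{w}^i_{t,k})=\nabla F_i(\mathbf{w}^i_{t,k})$. - Variance: $\mathbb{E}\|g_i-\nabla F_i\|^2\le\sigma^2$. - Bounded second moment: $\mathbb{E}\|g_i(\mathbf{w}^i_{t,k})\|^2\le G^2$. - Each $F_i$ is $L$-smooth and $\mu$-strongly convex. Notation: $\mathbf{w}_\star$ minimizes $F$ and $f_\star=F(\mathbf{w}_\star)$. Also $\mathbf{w}^i_\star=\arg\min F_i$ and $\Gamma=f_\star-\sum_ip_iF_i(\mathbf{w}^i_\star)$. $\mathbb{E}$ is total expectation. *)

theory Defs
  imports "HOL-Analysis.Analysis" "HOL-Probability.Probability"
begin

definition strongly_convex :: "real \<Rightarrow> ('v::real_inner \<Rightarrow> real) \<Rightarrow> bool" where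
  "strongly_convex \<mu> f \<longleftrightarrow> convex_on UNIV (\<lambda>x. f x - \<mu> / 2 * (norm x)\<^sup>2)"

definition L_smooth :: "real \<Rightarrow> ('v::real_inner \<Rightarrow> real) \<Rightarrow> ('v \<Rightarrow> 'v) \<Rightarrow> bool" where
  "L_smooth L f gf \<longleftrightarrow> (\<forall>x. GDERIV f x :> gf x) \<and> (\<forall>x y. norm (gf x - gf y) \<le> L * norm (x - y))"

text \<open>Local FedProx iterates of one client in one round, started at w0 (the server model
  of the round), with stochastic-gradient oracle Gi and noise samples xs k at local step k:
  w_0 = w0,  w_(k+1) = (1 - alpha gamma) w_k + alpha gamma w0 - gamma Gi w_k (xs k).\<close>
fun fedprox_local ::
  "real \<Rightarrow> real \<Rightarrow> ('v::real_vector \<Rightarrow> 'x \<Rightarrow> 'v) \<Rightarrow> 'v \<Rightarrow> (nat \<Rightarrow> 'x) \<Rightarrow> nat \<Rightarrow> 'v" where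
  "fedprox_local \<alpha> \<gamma> Gi w0 xs 0 = w0"
| "fedprox_local \<alpha> \<gamma> Gi w0 xs (Suc k) =
     (1 - \<alpha> * \<gamma>) *\<^sub>R fedprox_local \<alpha> \<gamma> Gi w0 xs k + (\<alpha> * \<gamma>) *\<^sub>R w0
     - \<gamma> *\<^sub>R Gi (fedprox_local \<alpha> \<gamma> Gi w0 xs k) (xs k)"

end

theory Submission
  imports Defs
begin

text \<open>
  Let \<open>D k\<close> be the expected squared distance of the averaged iterate to \<open>wstar\<close> after \<open>k\<close>
  local steps. Averaging the FedProx update over the clients, the new mean minus \<open>wstar\<close> is the
  update \<open>U\<^sub>k\<close> computed with exact local gradients minus \<open>\<gamma>\<close> times the weighted gradient noise.
  The noise of step \<open>k\<close> is independent of the start model and of all earlier samples, on which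
  \<open>U\<^sub>k\<close> depends, and the noises of different clients are independent of each other; so the
  cross term vanishes in expectation and the noise contributes at most \<open>\<gamma>\<^sup>2 \<sigma>\<^sup>2 \<Sum> p\<^sub>i\<^sup>2\<close>.
  The exact update is bounded deterministically: the proximal pull is a convex combination with
  the start model, and the gradient part is the FedAvg estimate from strong convexity and smoothness
  (with \<open>\<gamma> \<le> 1/(2L)\<close>), up to the client drift, whose mean square is at most \<open>\<gamma>\<^sup>2 k\<^sup>2 G\<^sup>2\<close>.
  This gives \<open>D (k+1) \<le> \<alpha>\<gamma> D 0 + (1 - \<gamma>(\<alpha> + \<mu>)) D k + B\<close>, which unrolls over the
  \<open>E\<close> local steps.
\<close>

lemma norm_add_square: "(norm (x + y))\<^sup>2 = (norm x)\<^sup>2 + 2 * (x \<bullet> y) + (norm (y::'a::real_inner))\<^sup>2"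
  by (simp add: power2_norm_eq_inner inner_add_left inner_add_right inner_commute)

lemma norm_diff_square: "(norm (x - y))\<^sup>2 = (norm x)\<^sup>2 - 2 * (x \<bullet> y) + (norm (y::'a::real_inner))\<^sup>2"
  by (simp add: power2_norm_eq_inner inner_diff_left inner_diff_right inner_commute)

lemma gderiv_along_line:
  fixes f :: "'v::real_inner \<Rightarrow> real"
  assumes "GDERIV f (x + t *\<^sub>R d) :> g"
  shows "((\<lambda>s. f (x + s *\<^sub>R d)) has_real_derivative (g \<bullet> d)) (at t)"
proof -
  have "((\<lambda>s. x + s *\<^sub>R d) has_derivative (\<lambda>h. h *\<^sub>R d)) (at t)"
    by (auto intro!: derivative_eq_intros)
  from has_derivative_compose[OF this assms[unfolded gderiv_def]]
  show ?thesis
    unfolding has_field_derivative_def by (rule has_derivative_eq_rhs) (auto simp: fun_eq_iff inner_commute)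
qed

lemma convex_on_line:
  assumes "convex_on UNIV h"
  shows "convex_on UNIV (\<lambda>t::real. h (x + t *\<^sub>R d))"
proof (rule convex_onI)
  fix t a b :: real
  assume "0 < t" "t < 1"
  moreover have "x + ((1 - t) *\<^sub>R a + t *\<^sub>R b) *\<^sub>R d = (1 - t) *\<^sub>R (x + a *\<^sub>R d) + t *\<^sub>R (x + b *\<^sub>R d)"
    by (simp add: algebra_simps)
  ultimately show "h (x + ((1 - t) *\<^sub>R a + t *\<^sub>R b) *\<^sub>R d) \<le> (1 - t) * h (x + a *\<^sub>R d) + t * h (x + b *\<^sub>R d)"
    using convex_onD[OF assms] by simp
qed simp

lemma L_smooth_descent:
  fixes f :: "'v::real_inner \<Rightarrow> real"
  assumes "L_smooth L f gf"
  shows "f (x + d) \<le> f x + gf x \<bullet> d + L / 2 * (norm d)\<^sup>2"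
proof -
  have grad: "\<And>z. GDERIV f z :> gf z"
    and lip: "\<And>a b. norm (gf a - gf b) \<le> L * norm (a - b)"
    using assms unfolding L_smooth_def by auto
  define \<psi> where "\<psi> t = f (x + t *\<^sub>R d) - t * (gf x \<bullet> d) - t\<^sup>2 * (L * (norm d)\<^sup>2 / 2)" for t
  have deriv: "(\<psi> has_real_derivative (gf (x + t *\<^sub>R d) \<bullet> d - gf x \<bullet> d - t * (L * (norm d)\<^sup>2))) (at t)"
    for t
    unfolding \<psi>_def by (auto intro!: derivative_eq_intros gderiv_along_line grad)
  have "\<psi> 1 \<le> \<psi> 0"
  proof (rule DERIV_nonpos_imp_nonincreasing[of 0 1 \<psi>])
    fix t :: real
    assume t: "0 \<le> t" "t \<le> 1"
    have "gf (x + t *\<^sub>R d) \<bullet> d - gf x \<bullet> d \<le> norm (gf (x + t *\<^sub>R d) - gf x) * norm d"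
      by (metis inner_diff_left norm_cauchy_schwarz)
    also have "\<dots> \<le> L * norm (t *\<^sub>R d) * norm d"
      using lip[of "x + t *\<^sub>R d" x] by (intro mult_right_mono) auto
    also have "\<dots> = t * (L * (norm d)\<^sup>2)"
      using t by (simp add: power2_eq_square)
    finally show "\<exists>y. (\<psi> has_real_derivative y) (at t) \<and> y \<le> 0"
      using deriv[of t] by auto
  qed simp
  then show ?thesis
    unfolding \<psi>_def by simp
qed

lemma L_smooth_gradient_bound:
  fixes f :: "'v::real_inner \<Rightarrow> real"
  assumes "L_smooth L f gf" and "L > 0" and "\<And>y. f m \<le> f y"
  shows "(norm (gf x))\<^sup>2 \<le> 2 * L * (f x - f m)"
proof -
  have "f m \<le> f (x + (- 1 / L) *\<^sub>R gf x)"
    by fact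
  also have "\<dots> \<le> f x + gf x \<bullet> ((- 1 / L) *\<^sub>R gf x) + L / 2 * (norm ((- 1 / L) *\<^sub>R gf x))\<^sup>2"
    by (rule L_smooth_descent[OF assms(1)])
  also have "\<dots> = f x - (norm (gf x))\<^sup>2 / (2 * L)"
    using \<open>L > 0\<close> by (simp add: dot_square_norm power_mult_distrib power2_eq_square field_simps)
  finally show ?thesis
    using \<open>L > 0\<close> by (simp add: field_simps)
qed

lemma strongly_convex_tangent_bound:
  fixes f :: "'v::real_inner \<Rightarrow> real"
  assumes "strongly_convex \<mu> f" and grad: "\<And>z. GDERIV f z :> gf z"
  shows "f x + gf x \<bullet> (y - x) + \<mu> / 2 * (norm (y - x))\<^sup>2 \<le> f y"
proof -
  define h where "h z = f z - \<mu> / 2 * (norm z)\<^sup>2" for z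
  define d where "d = y - x"
  define \<psi> where "\<psi> t = h (x + t *\<^sub>R d)" for t
  have "convex_on UNIV \<psi>"
    using assms(1) unfolding strongly_convex_def h_def \<psi>_def by (rule convex_on_line)
  have f_deriv: "((\<lambda>t. f (x + t *\<^sub>R d)) has_real_derivative (gf x \<bullet> d)) (at 0)"
    using grad[of x] by (intro gderiv_along_line) simp
  have norm_deriv: "((\<lambda>t. (norm (x + t *\<^sub>R d))\<^sup>2) has_real_derivative 2 * (x \<bullet> d)) (at 0)"
  proof -
    have "(\<lambda>t. (norm (x + t *\<^sub>R d))\<^sup>2) = (\<lambda>t. (norm x)\<^sup>2 + 2 * t * (x \<bullet> d) + t\<^sup>2 * (norm d)\<^sup>2)"
      by (simp add: norm_add_square power_mult_distrib fun_eq_iff)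
    then show ?thesis
      by (auto intro!: derivative_eq_intros)
  qed
  have "(\<psi> has_real_derivative (gf x \<bullet> d - \<mu> * (x \<bullet> d))) (at 0)"
    unfolding \<psi>_def h_def using DERIV_diff[OF f_deriv DERIV_cmult[OF norm_deriv, of "\<mu> / 2"]] by simp
  then have "gf x \<bullet> d - \<mu> * (x \<bullet> d) \<le> \<psi> 1 - \<psi> 0"
    using convex_on_imp_above_tangent[OF \<open>convex_on UNIV \<psi>\<close>, of 0 1]
    by (auto simp: has_field_derivative_at_within)
  moreover have "(norm y)\<^sup>2 = (norm x)\<^sup>2 + 2 * (x \<bullet> d) + (norm d)\<^sup>2"
    unfolding d_def by (metis add.commute diff_add_cancel norm_add_square)
  ultimately show ?thesis
    unfolding \<psi>_def h_def d_def by (simp add: algebra_simps)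
qed

lemma inner_le_young:
  fixes u v :: "'v::real_inner"
  assumes "c > 0"
  shows "2 * (u \<bullet> v) \<le> c * (norm u)\<^sup>2 + (norm v)\<^sup>2 / c"
proof -
  have "0 \<le> (norm (c *\<^sub>R u - v))\<^sup>2 / c"
    using assms by simp
  also have "\<dots> = c * (norm u)\<^sup>2 - 2 * (u \<bullet> v) + (norm v)\<^sup>2 / c"
    using assms unfolding norm_diff_square by (simp add: power2_eq_square field_simps)
  finally show ?thesis
    by simp
qed

lemma scaled_inner_le_young:
  fixes u v :: "'v::real_inner"
  assumes "0 \<le> c" and "c \<le> 1"
  shows "2 * t * (c *\<^sub>R u \<bullet> v) \<le> 2 * (norm u)\<^sup>2 + t\<^sup>2 / 2 * (norm v)\<^sup>2"
proof -
  have "2 * (c *\<^sub>R u \<bullet> t *\<^sub>R v) \<le> 2 * (norm (c *\<^sub>R u))\<^sup>2 + (norm (t *\<^sub>R v))\<^sup>2 / 2"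
    by (rule inner_le_young) simp
  moreover have "(norm (c *\<^sub>R u))\<^sup>2 \<le> (norm u)\<^sup>2"
    using assms by (simp add: power_mult_distrib mult_left_le_one_le power_le_one)
  ultimately show ?thesis
    by (simp add: power_mult_distrib algebra_simps)
qed

lemma norm_convex_combination_sq_le:
  fixes u v :: "'v::real_inner"
  assumes "0 \<le> a" "0 \<le> b" "a + b = 1"
  shows "(norm (a *\<^sub>R u + b *\<^sub>R v))\<^sup>2 \<le> a * (norm u)\<^sup>2 + b * (norm v)\<^sup>2"
proof -
  have "a * (norm u)\<^sup>2 + b * (norm v)\<^sup>2 - (norm (a *\<^sub>R u + b *\<^sub>R v))\<^sup>2 = a * b * (norm (u - v))\<^sup>2"
  proof -
    have b: "b = 1 - a"
      using assms(3) by simp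
    show ?thesis
      unfolding b power2_norm_eq_inner
      by (simp add: inner_add_left inner_add_right inner_diff_left inner_diff_right inner_commute algebra_simps)
  qed
  moreover have "0 \<le> a * b * (norm (u - v))\<^sup>2"
    using assms by simp
  ultimately show ?thesis
    by linarith
qed

lemma weighted_sq_dist_decomposition:
  fixes v :: "'i \<Rightarrow> 'v::real_inner"
  assumes "(\<Sum>i\<in>S. p i) = 1"
  defines "m \<equiv> \<Sum>j\<in>S. p j *\<^sub>R v j"
  shows "(\<Sum>i\<in>S. p i * (norm (v i - c))\<^sup>2) = (\<Sum>i\<in>S. p i * (norm (v i - m))\<^sup>2) + (norm (m - c))\<^sup>2"
proof -
  have "(\<Sum>i\<in>S. p i * ((v i - m) \<bullet> (m - c))) = (\<Sum>i\<in>S. p i *\<^sub>R (v i - m)) \<bullet> (m - c)"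
    by (simp add: inner_sum_left)
  also have "(\<Sum>i\<in>S. p i *\<^sub>R (v i - m)) = 0"
    using assms by (simp add: scaleR_diff_right sum_subtractf flip: scaleR_sum_left)
  finally have cross: "(\<Sum>i\<in>S. p i * ((v i - m) \<bullet> (m - c))) = 0"
    by simp
  have "(norm (v i - c))\<^sup>2 = (norm (v i - m))\<^sup>2 + 2 * ((v i - m) \<bullet> (m - c)) + (norm (m - c))\<^sup>2" for i
    using norm_add_square[of "v i - m" "m - c"] by simp
  then have "p i * (norm (v i - c))\<^sup>2
      = p i * (norm (v i - m))\<^sup>2 + 2 * (p i * ((v i - m) \<bullet> (m - c))) + p i * (norm (m - c))\<^sup>2" for i
    by (simp only: distrib_left mult.left_commute)
  then have "(\<Sum>i\<in>S. p i * (norm (v i - c))\<^sup>2) = (\<Sum>i\<in>S. p i * (norm (v i - m))\<^sup>2)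
      + 2 * (\<Sum>i\<in>S. p i * ((v i - m) \<bullet> (m - c))) + (\<Sum>i\<in>S. p i) * (norm (m - c))\<^sup>2"
    by (simp add: sum.distrib sum_distrib_left sum_distrib_right)
  then show ?thesis
    using cross assms by simp
qed

lemma
  fixes v :: "'i \<Rightarrow> 'v::real_inner"
  assumes "(\<Sum>i\<in>S. p i) = 1" and "\<And>i. i \<in> S \<Longrightarrow> 0 \<le> p i"
  defines "m \<equiv> \<Sum>j\<in>S. p j *\<^sub>R v j"
  shows norm_weighted_mean_diff_sq_le: "(norm (m - c))\<^sup>2 \<le> (\<Sum>i\<in>S. p i * (norm (v i - c))\<^sup>2)"
    and weighted_sq_dist_to_mean_le: "(\<Sum>i\<in>S. p i * (norm (v i - m))\<^sup>2) \<le> (\<Sum>i\<in>S. p i * (norm (v i - c))\<^sup>2)"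
proof -
  have "0 \<le> (\<Sum>i\<in>S. p i * (norm (v i - m))\<^sup>2)"
    using assms(2) by (intro sum_nonneg) auto
  then show "(norm (m - c))\<^sup>2 \<le> (\<Sum>i\<in>S. p i * (norm (v i - c))\<^sup>2)"
    and "(\<Sum>i\<in>S. p i * (norm (v i - m))\<^sup>2) \<le> (\<Sum>i\<in>S. p i * (norm (v i - c))\<^sup>2)"
    using weighted_sq_dist_decomposition[OF assms(1), of v c] unfolding m_def by auto
qed

locale federated_objective =
  fixes S :: "'i set" and p :: "'i \<Rightarrow> real"
    and F :: "'i \<Rightarrow> 'v::real_inner \<Rightarrow> real" and gF :: "'i \<Rightarrow> 'v \<Rightarrow> 'v"
    and L \<mu> :: real and wstar :: 'v and wloc_star :: "'i \<Rightarrow> 'v"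
  assumes p_nonneg: "\<And>i. i \<in> S \<Longrightarrow> 0 \<le> p i" and p_sum: "(\<Sum>i\<in>S. p i) = 1"
    and L_pos: "0 < L" and mu_nonneg: "0 \<le> \<mu>"
    and smooth: "\<And>i. i \<in> S \<Longrightarrow> L_smooth L (F i) (gF i)"
    and strconv: "\<And>i. i \<in> S \<Longrightarrow> strongly_convex \<mu> (F i)"
    and wstar_min: "\<And>x. (\<Sum>i\<in>S. p i * F i wstar) \<le> (\<Sum>i\<in>S. p i * F i x)"
    and wloc_star_min: "\<And>i x. i \<in> S \<Longrightarrow> F i (wloc_star i) \<le> F i x"
begin

definition heterogeneity :: real where
  "heterogeneity = (\<Sum>i\<in>S. p i * F i wstar) - (\<Sum>i\<in>S. p i * F i (wloc_star i))"

lemma heterogeneity_nonneg: "0 \<le> heterogeneity"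
  using wloc_star_min p_nonneg unfolding heterogeneity_def
  by (simp add: sum_mono mult_left_mono)

lemma tangent_bound: "i \<in> S \<Longrightarrow> F i x + gF i x \<bullet> (y - x) + \<mu> / 2 * (norm (y - x))\<^sup>2 \<le> F i y"
  using strongly_convex_tangent_bound[OF strconv] smooth unfolding L_smooth_def by blast

lemma gradient_bound: "i \<in> S \<Longrightarrow> (norm (gF i x))\<^sup>2 \<le> 2 * L * (F i x - F i (wloc_star i))"
  using L_smooth_gradient_bound[OF smooth L_pos wloc_star_min] .

lemma weighted_inner_gradient_lower_bound:
  "(\<Sum>i\<in>S. p i * F i (x i)) - (\<Sum>i\<in>S. p i * F i wstar) + \<mu> / 2 * (norm ((\<Sum>i\<in>S. p i *\<^sub>R x i) - wstar))\<^sup>2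
     \<le> (\<Sum>i\<in>S. p i * ((x i - wstar) \<bullet> gF i (x i)))"
proof -
  have "\<mu> / 2 * (norm ((\<Sum>i\<in>S. p i *\<^sub>R x i) - wstar))\<^sup>2 \<le> \<mu> / 2 * (\<Sum>i\<in>S. p i * (norm (x i - wstar))\<^sup>2)"
    using mu_nonneg by (intro mult_left_mono norm_weighted_mean_diff_sq_le[OF p_sum p_nonneg]) auto
  also have "\<dots> = (\<Sum>i\<in>S. p i * (F i (x i) - F i wstar + \<mu> / 2 * (norm (x i - wstar))\<^sup>2))
      - ((\<Sum>i\<in>S. p i * F i (x i)) - (\<Sum>i\<in>S. p i * F i wstar))"
    by (simp add: sum.distrib sum_subtractf sum_distrib_left algebra_simps)
  also have "(\<Sum>i\<in>S. p i * (F i (x i) - F i wstar + \<mu> / 2 * (norm (x i - wstar))\<^sup>2))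
      \<le> (\<Sum>i\<in>S. p i * ((x i - wstar) \<bullet> gF i (x i)))"
  proof (intro sum_mono mult_left_mono p_nonneg)
    fix i
    assume "i \<in> S"
    have "gF i (x i) \<bullet> (wstar - x i) = - ((x i - wstar) \<bullet> gF i (x i))"
      by (simp add: inner_commute inner_diff_left inner_diff_right)
    with tangent_bound[OF \<open>i \<in> S\<close>, of "x i" wstar]
    show "F i (x i) - F i wstar + \<mu> / 2 * (norm (x i - wstar))\<^sup>2 \<le> (x i - wstar) \<bullet> gF i (x i)"
      by (simp add: norm_minus_commute)
  qed
  finally show ?thesis
    by simp
qed

lemma weighted_gradient_sq_bound:
  "(\<Sum>i\<in>S. p i * (norm (gF i (x i)))\<^sup>2)
     \<le> 2 * L * ((\<Sum>i\<in>S. p i * F i (x i)) - (\<Sum>i\<in>S. p i * F i (wloc_star i)))"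
proof -
  have "(\<Sum>i\<in>S. p i * (norm (gF i (x i)))\<^sup>2) \<le> (\<Sum>i\<in>S. p i * (2 * L * (F i (x i) - F i (wloc_star i))))"
    using gradient_bound p_nonneg by (intro sum_mono mult_left_mono) auto
  then show ?thesis
    by (simp add: sum_distrib_left sum_subtractf algebra_simps)
qed

lemma weighted_objective_lower_bound:
  assumes "0 < \<gamma>"
  shows "(\<Sum>i\<in>S. p i * F i y) - \<gamma> * L * ((\<Sum>i\<in>S. p i * F i y) - (\<Sum>i\<in>S. p i * F i (wloc_star i)))
           - (\<Sum>i\<in>S. p i * (norm (x i - y))\<^sup>2) / (2 * \<gamma>)
         \<le> (\<Sum>i\<in>S. p i * F i (x i))"
proof -
  have "F i y - \<gamma> * L * (F i y - F i (wloc_star i)) - (norm (x i - y))\<^sup>2 / (2 * \<gamma>) \<le> F i (x i)"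
    if "i \<in> S" for i
  proof -
    have "2 * (gF i y \<bullet> (y - x i)) \<le> \<gamma> * (norm (gF i y))\<^sup>2 + (norm (x i - y))\<^sup>2 / \<gamma>"
      using inner_le_young[OF assms] by (simp add: norm_minus_commute)
    moreover have "\<gamma> * (norm (gF i y))\<^sup>2 \<le> \<gamma> * (2 * L * (F i y - F i (wloc_star i)))"
      using gradient_bound[OF that] assms by (intro mult_left_mono) auto
    ultimately have "gF i y \<bullet> (y - x i) \<le> \<gamma> * L * (F i y - F i (wloc_star i)) + (norm (x i - y))\<^sup>2 / (2 * \<gamma>)"
      by (simp add: field_simps)
    moreover have "F i y + gF i y \<bullet> (x i - y) + \<mu> / 2 * (norm (x i - y))\<^sup>2 \<le> F i (x i)"
      by (rule tangent_bound[OF that])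
    moreover have "0 \<le> \<mu> / 2 * (norm (x i - y))\<^sup>2"
      using mu_nonneg by simp
    moreover have "gF i y \<bullet> (x i - y) = - (gF i y \<bullet> (y - x i))"
      by (simp add: inner_diff_right)
    ultimately show ?thesis
      by linarith
  qed
  then have "(\<Sum>i\<in>S. p i * (F i y - \<gamma> * L * (F i y - F i (wloc_star i)) - (norm (x i - y))\<^sup>2 / (2 * \<gamma>)))
      \<le> (\<Sum>i\<in>S. p i * F i (x i))"
    using p_nonneg by (intro sum_mono mult_left_mono) auto
  then show ?thesis
    by (simp add: sum.distrib sum_subtractf sum_distrib_left sum_divide_distrib algebra_simps)
qed


lemma weighted_objective_gap_lower_bound:
  fixes x :: "'i \<Rightarrow> 'v"
  assumes "0 < \<gamma>" and "\<gamma> \<le> 1 / (2 * L)"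
  defines "xb \<equiv> \<Sum>i\<in>S. p i *\<^sub>R x i"
  shows "- (\<gamma> * L * heterogeneity + (\<Sum>i\<in>S. p i * (norm (x i - xb))\<^sup>2) / (2 * \<gamma>))
     \<le> (\<Sum>i\<in>S. p i * F i (x i)) - (\<Sum>i\<in>S. p i * F i wstar)"
proof -
  define Fs where "Fs = (\<Sum>i\<in>S. p i * F i wstar)"
  define Fb where "Fb = (\<Sum>i\<in>S. p i * F i xb)"
  define Fm where "Fm = (\<Sum>i\<in>S. p i * F i (wloc_star i))"
  have "Fb - \<gamma> * L * (Fb - Fm) - (\<Sum>i\<in>S. p i * (norm (x i - xb))\<^sup>2) / (2 * \<gamma>) \<le> (\<Sum>i\<in>S. p i * F i (x i))"
    unfolding Fb_def Fm_def by (rule weighted_objective_lower_bound[OF assms(1)])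
  moreover have "0 \<le> (1 - \<gamma> * L) * (Fb - Fs)"
    using assms(2) L_pos wstar_min[of xb] unfolding Fb_def Fs_def
    by (intro mult_nonneg_nonneg) (auto simp: field_simps)
  ultimately show ?thesis
    unfolding heterogeneity_def Fs_def[symmetric] Fm_def[symmetric] by (simp add: algebra_simps)
qed

lemma gradient_step_bound:
  fixes x :: "'i \<Rightarrow> 'v"
  assumes "0 < \<gamma>" and "\<gamma> \<le> 1 / (2 * L)"
  defines "xb \<equiv> \<Sum>i\<in>S. p i *\<^sub>R x i"
  shows "2 * \<gamma>\<^sup>2 * (\<Sum>i\<in>S. p i * (norm (gF i (x i)))\<^sup>2) - 2 * \<gamma> * (\<Sum>i\<in>S. p i * ((x i - wstar) \<bullet> gF i (x i)))
     \<le> 6 * L * \<gamma>\<^sup>2 * heterogeneity + (\<Sum>i\<in>S. p i * (norm (x i - xb))\<^sup>2) - \<gamma> * \<mu> * (norm (xb - wstar))\<^sup>2"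
proof -
  define gap where "gap = (\<Sum>i\<in>S. p i * F i (x i)) - (\<Sum>i\<in>S. p i * F i wstar)"
  define S1 where "S1 = (\<Sum>i\<in>S. p i * (norm (x i - xb))\<^sup>2)"
  define u where "u = \<gamma> * L * heterogeneity + S1 / (2 * \<gamma>)"
  have L\<gamma>: "0 \<le> 1 - 2 * (L * \<gamma>)"
    using assms(2) L_pos by (simp add: field_simps)
  have "0 \<le> u"
    unfolding u_def S1_def using assms(1) L_pos heterogeneity_nonneg p_nonneg by (simp add: sum_nonneg)
  have "- u \<le> gap"
    unfolding u_def gap_def S1_def xb_def by (rule weighted_objective_gap_lower_bound[OF assms(1,2)])
  then have "4 * L * \<gamma>\<^sup>2 * (gap + heterogeneity) - 2 * \<gamma> * gap
      \<le> 4 * L * \<gamma>\<^sup>2 * heterogeneity + (2 * \<gamma> * (1 - 2 * (L * \<gamma>))) * u"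
    using L\<gamma> assms(1) mult_left_mono[of "- u" gap "2 * \<gamma> * (1 - 2 * (L * \<gamma>))"]
    by (simp add: power2_eq_square algebra_simps)
  also have "\<dots> \<le> 4 * L * \<gamma>\<^sup>2 * heterogeneity + 2 * \<gamma> * u"
    using \<open>0 \<le> u\<close> assms(1) L_pos by (simp add: algebra_simps)
  also have "\<dots> = 6 * L * \<gamma>\<^sup>2 * heterogeneity + S1"
    using assms(1) by (simp add: u_def power2_eq_square field_simps)
  finally have key: "4 * L * \<gamma>\<^sup>2 * (gap + heterogeneity) - 2 * \<gamma> * gap \<le> 6 * L * \<gamma>\<^sup>2 * heterogeneity + S1" .
  have "2 * \<gamma>\<^sup>2 * (\<Sum>i\<in>S. p i * (norm (gF i (x i)))\<^sup>2) \<le> 2 * \<gamma>\<^sup>2 * (2 * L * (gap + heterogeneity))"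
    using weighted_gradient_sq_bound[of x] unfolding gap_def heterogeneity_def
    by (intro mult_left_mono) (auto simp: algebra_simps)
  moreover have "2 * \<gamma> * (gap + \<mu> / 2 * (norm (xb - wstar))\<^sup>2)
      \<le> 2 * \<gamma> * (\<Sum>i\<in>S. p i * ((x i - wstar) \<bullet> gF i (x i)))"
    unfolding gap_def xb_def using assms(1)
    by (intro mult_left_mono weighted_inner_gradient_lower_bound) auto
  ultimately show ?thesis
    using key unfolding S1_def by (simp add: algebra_simps)
qed

lemma proximal_cross_term_bound:
  fixes x :: "'i \<Rightarrow> 'v"
  assumes "0 \<le> c" and "c \<le> 1"
  defines "xb \<equiv> \<Sum>i\<in>S. p i *\<^sub>R x i" and "g \<equiv> \<Sum>i\<in>S. p i *\<^sub>R gF i (x i)"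
  shows "- (2 * \<gamma> * (((1 - c) *\<^sub>R (xb - wstar) + c *\<^sub>R (x0 - wstar)) \<bullet> g)) + \<gamma>\<^sup>2 * (norm g)\<^sup>2
     \<le> 2 * \<gamma>\<^sup>2 * (\<Sum>i\<in>S. p i * (norm (gF i (x i)))\<^sup>2) - 2 * \<gamma> * (\<Sum>i\<in>S. p i * ((x i - wstar) \<bullet> gF i (x i)))
       + 2 * (\<Sum>i\<in>S. p i * (norm (x i - xb))\<^sup>2) + 2 * (\<Sum>i\<in>S. p i * (norm (x i - x0))\<^sup>2)"
proof -
  define Q where "Q = (\<Sum>i\<in>S. p i * (norm (gF i (x i)))\<^sup>2)"
  define S0 where "S0 = (\<Sum>i\<in>S. p i * (norm (x i - x0))\<^sup>2)"
  define S1 where "S1 = (\<Sum>i\<in>S. p i * (norm (x i - xb))\<^sup>2)"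
  define I where "I = (\<Sum>i\<in>S. p i * ((x i - wstar) \<bullet> gF i (x i)))"
  define J where "J = (\<Sum>i\<in>S. p i * ((x i - xb) \<bullet> gF i (x i)))"
  define K where "K = c *\<^sub>R (xb - x0) \<bullet> g"
  define A where "A = ((1 - c) *\<^sub>R (xb - wstar) + c *\<^sub>R (x0 - wstar)) \<bullet> g"
  have g_sq: "(norm g)\<^sup>2 \<le> Q"
    using norm_weighted_mean_diff_sq_le[OF p_sum p_nonneg, of "\<lambda>i. gF i (x i)" 0] by (simp add: g_def Q_def)
  have "A = I - J - K"
  proof -
    have "(xb - wstar) \<bullet> g = (\<Sum>i\<in>S. p i * ((x i - wstar) \<bullet> gF i (x i) - (x i - xb) \<bullet> gF i (x i)))"
      unfolding g_def by (simp add: inner_sum_right inner_diff_left)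
    then show ?thesis
      unfolding A_def I_def J_def K_def by (simp add: algebra_simps inner_diff_left sum_subtractf)
  qed
  then have "2 * \<gamma> * A = 2 * \<gamma> * I - 2 * \<gamma> * J - 2 * \<gamma> * K"
    by (simp add: right_diff_distrib)
  moreover have "2 * \<gamma> * J \<le> 2 * S1 + \<gamma>\<^sup>2 / 2 * Q"
  proof -
    have "(\<Sum>i\<in>S. p i * (2 * \<gamma> * (1 *\<^sub>R (x i - xb) \<bullet> gF i (x i))))
        \<le> (\<Sum>i\<in>S. p i * (2 * (norm (x i - xb))\<^sup>2 + \<gamma>\<^sup>2 / 2 * (norm (gF i (x i)))\<^sup>2))"
      using p_nonneg by (intro sum_mono mult_left_mono scaled_inner_le_young) auto
    then show ?thesis
      unfolding J_def S1_def Q_def by (simp add: sum.distrib sum_distrib_left algebra_simps)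
  qed
  moreover have "2 * \<gamma> * K \<le> 2 * S0 + \<gamma>\<^sup>2 / 2 * Q"
  proof -
    have "2 * \<gamma> * K \<le> 2 * (norm (xb - x0))\<^sup>2 + \<gamma>\<^sup>2 / 2 * (norm g)\<^sup>2"
      unfolding K_def using assms(1,2) by (rule scaled_inner_le_young)
    also have "\<dots> \<le> 2 * S0 + \<gamma>\<^sup>2 / 2 * Q"
      using g_sq norm_weighted_mean_diff_sq_le[OF p_sum p_nonneg, of x x0]
      by (intro add_mono mult_left_mono) (auto simp: S0_def xb_def)
    finally show ?thesis .
  qed
  moreover have "\<gamma>\<^sup>2 * (norm g)\<^sup>2 \<le> \<gamma>\<^sup>2 * Q"
    using g_sq by (simp add: mult_left_mono)
  ultimately show ?thesis
    unfolding Q_def[symmetric] I_def[symmetric] S0_def[symmetric] S1_def[symmetric] A_def[symmetric]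
    by (simp add: algebra_simps)
qed

lemma proximal_mean_step_bound:
  fixes x :: "'i \<Rightarrow> 'v"
  assumes "0 \<le> \<alpha>" and "0 < \<gamma>" and "\<gamma> \<le> 1 / (2 * L)" and "\<gamma> * (\<alpha> + \<mu>) \<le> 1"
  defines "xb \<equiv> \<Sum>i\<in>S. p i *\<^sub>R x i"
  shows "(norm ((1 - \<alpha> * \<gamma>) *\<^sub>R (xb - wstar) + (\<alpha> * \<gamma>) *\<^sub>R (x0 - wstar) - \<gamma> *\<^sub>R (\<Sum>i\<in>S. p i *\<^sub>R gF i (x i))))\<^sup>2
     \<le> \<alpha> * \<gamma> * (norm (x0 - wstar))\<^sup>2 + (1 - \<gamma> * (\<alpha> + \<mu>)) * (norm (xb - wstar))\<^sup>2
       + 6 * L * \<gamma>\<^sup>2 * heterogeneity + 5 * (\<Sum>i\<in>S. p i * (norm (x i - x0))\<^sup>2)"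
proof -
  define a where "a = (1 - \<alpha> * \<gamma>) *\<^sub>R (xb - wstar) + (\<alpha> * \<gamma>) *\<^sub>R (x0 - wstar)"
  define g where "g = (\<Sum>i\<in>S. p i *\<^sub>R gF i (x i))"
  define S0 where "S0 = (\<Sum>i\<in>S. p i * (norm (x i - x0))\<^sup>2)"
  define S1 where "S1 = (\<Sum>i\<in>S. p i * (norm (x i - xb))\<^sup>2)"
  have \<alpha>\<gamma>: "0 \<le> \<alpha> * \<gamma>" "\<alpha> * \<gamma> \<le> 1"
    using assms(1,2,4) mu_nonneg by (auto simp: algebra_simps intro: order_trans[OF _ assms(4)])
  have "(norm (a - \<gamma> *\<^sub>R g))\<^sup>2 = (norm a)\<^sup>2 - 2 * \<gamma> * (a \<bullet> g) + \<gamma>\<^sup>2 * (norm g)\<^sup>2"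
    by (simp add: norm_diff_square power_mult_distrib)
  moreover have "(norm a)\<^sup>2 \<le> (1 - \<alpha> * \<gamma>) * (norm (xb - wstar))\<^sup>2 + \<alpha> * \<gamma> * (norm (x0 - wstar))\<^sup>2"
    unfolding a_def using \<alpha>\<gamma> by (intro norm_convex_combination_sq_le) auto
  moreover have "- (2 * \<gamma> * (a \<bullet> g)) + \<gamma>\<^sup>2 * (norm g)\<^sup>2
      \<le> 2 * \<gamma>\<^sup>2 * (\<Sum>i\<in>S. p i * (norm (gF i (x i)))\<^sup>2) - 2 * \<gamma> * (\<Sum>i\<in>S. p i * ((x i - wstar) \<bullet> gF i (x i)))
        + 2 * S1 + 2 * S0"
    unfolding a_def g_def S0_def S1_def xb_def by (rule proximal_cross_term_bound[OF \<alpha>\<gamma>])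
  moreover have "2 * \<gamma>\<^sup>2 * (\<Sum>i\<in>S. p i * (norm (gF i (x i)))\<^sup>2) - 2 * \<gamma> * (\<Sum>i\<in>S. p i * ((x i - wstar) \<bullet> gF i (x i)))
      \<le> 6 * L * \<gamma>\<^sup>2 * heterogeneity + S1 - \<gamma> * \<mu> * (norm (xb - wstar))\<^sup>2"
    unfolding S1_def xb_def by (rule gradient_step_bound[OF assms(2,3)])
  moreover have "S1 \<le> S0"
    unfolding S1_def S0_def xb_def by (rule weighted_sq_dist_to_mean_le[OF p_sum p_nonneg])
  ultimately have "(norm (a - \<gamma> *\<^sub>R g))\<^sup>2
      \<le> \<alpha> * \<gamma> * (norm (x0 - wstar))\<^sup>2 + (1 - \<gamma> * (\<alpha> + \<mu>)) * (norm (xb - wstar))\<^sup>2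
       + 6 * L * \<gamma>\<^sup>2 * heterogeneity + 5 * S0"
    by (simp add: algebra_simps)
  then show ?thesis
    unfolding a_def g_def S0_def .
qed

end

definition square_integrable :: "'a measure \<Rightarrow> ('a \<Rightarrow> 'v::real_normed_vector) \<Rightarrow> bool" where
  "square_integrable M f \<longleftrightarrow> f \<in> borel_measurable M \<and> integrable M (\<lambda>\<omega>. (norm (f \<omega>))\<^sup>2)"

context
  fixes M :: "'a measure"
begin

lemma square_integrable_inner:
  fixes f g :: "'a \<Rightarrow> 'v::{real_inner, second_countable_topology}"
  assumes "square_integrable M f" and "square_integrable M g"
  shows "integrable M (\<lambda>\<omega>. f \<omega> \<bullet> g \<omega>)"
proof (rule Bochner_Integration.integrable_bound)
  show "integrable M (\<lambda>\<omega>. (norm (f \<omega>))\<^sup>2 + (norm (g \<omega>))\<^sup>2)"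
    using assms unfolding square_integrable_def by auto
  show "(\<lambda>\<omega>. f \<omega> \<bullet> g \<omega>) \<in> borel_measurable M"
    using assms unfolding square_integrable_def by (intro borel_measurable_inner) auto
  have "norm (f \<omega> \<bullet> g \<omega>) \<le> (norm (f \<omega>))\<^sup>2 + (norm (g \<omega>))\<^sup>2" for \<omega>
    using inner_le_young[of 1 "f \<omega>" "g \<omega>"] inner_le_young[of 1 "- f \<omega>" "g \<omega>"] by simp
  then show "AE \<omega> in M. norm (f \<omega> \<bullet> g \<omega>) \<le> norm ((norm (f \<omega>))\<^sup>2 + (norm (g \<omega>))\<^sup>2)"
    by simp
qed

lemma square_integrable_add:
  fixes f g :: "'a \<Rightarrow> 'v::{real_inner, second_countable_topology}"
  assumes "square_integrable M f" and "square_integrable M g"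
  shows "square_integrable M (\<lambda>\<omega>. f \<omega> + g \<omega>)"
proof -
  have "integrable M (\<lambda>\<omega>. (norm (f \<omega>))\<^sup>2 + 2 * (f \<omega> \<bullet> g \<omega>) + (norm (g \<omega>))\<^sup>2)"
    using assms square_integrable_inner[OF assms] unfolding square_integrable_def by auto
  then show ?thesis
    using assms unfolding square_integrable_def norm_add_square by auto
qed

lemma square_integrable_scaleR:
  "square_integrable M f \<Longrightarrow> square_integrable M (\<lambda>\<omega>. c *\<^sub>R f \<omega>)"
  unfolding square_integrable_def by (auto simp: power_mult_distrib)

lemma square_integrable_diff:
  fixes f g :: "'a \<Rightarrow> 'v::{real_inner, second_countable_topology}"
  assumes "square_integrable M f" and "square_integrable M g"
  shows "square_integrable M (\<lambda>\<omega>. f \<omega> - g \<omega>)"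
  using square_integrable_add[OF assms(1) square_integrable_scaleR[OF assms(2), of "- 1"]] by simp

lemma square_integrable_const:
  "finite_measure M \<Longrightarrow> square_integrable M (\<lambda>\<omega>. c)"
  unfolding square_integrable_def by (simp add: finite_measure.integrable_const)

lemma square_integrable_sum:
  fixes f :: "'i \<Rightarrow> 'a \<Rightarrow> 'v::{real_inner, second_countable_topology}"
  assumes "finite_measure M" and "\<And>i. i \<in> A \<Longrightarrow> square_integrable M (f i)"
  shows "square_integrable M (\<lambda>\<omega>. \<Sum>i\<in>A. f i \<omega>)"
  using assms(2)
proof (induction A rule: infinite_finite_induct)
  case (insert i A)
  then show ?case
    by (simp add: square_integrable_add)
qed (simp_all add: square_integrable_const[OF assms(1)])

lemma square_integrable_dominated:
  fixes f :: "'a \<Rightarrow> 'v::real_normed_vector" and g :: "'a \<Rightarrow> 'u::real_normed_vector"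
  assumes "square_integrable M f" and "g \<in> borel_measurable M"
    and "\<And>\<omega>. \<omega> \<in> space M \<Longrightarrow> norm (g \<omega>) \<le> norm (f \<omega>)"
  shows "square_integrable M g"
  unfolding square_integrable_def
proof
  show "integrable M (\<lambda>\<omega>. (norm (g \<omega>))\<^sup>2)"
  proof (rule Bochner_Integration.integrable_bound)
    show "integrable M (\<lambda>\<omega>. (norm (f \<omega>))\<^sup>2)"
      using assms(1) unfolding square_integrable_def by simp
    show "(\<lambda>\<omega>. (norm (g \<omega>))\<^sup>2) \<in> borel_measurable M"
      using assms(2) by measurable
    show "AE \<omega> in M. norm ((norm (g \<omega>))\<^sup>2) \<le> norm ((norm (f \<omega>))\<^sup>2)"
      using assms(3) by (auto intro!: AE_I2 power_mono)
  qed
qed fact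

end

text \<open>Independence of two random variables whose value types may differ (the library's
  \<open>indep_var\<close> requires a common type).\<close>

definition (in prob_space) indep_rv_pair :: "'s measure \<Rightarrow> ('a \<Rightarrow> 's) \<Rightarrow> 't measure \<Rightarrow> ('a \<Rightarrow> 't) \<Rightarrow> bool" where
  "indep_rv_pair S Z T Y \<longleftrightarrow> random_variable S Z \<and> random_variable T Y \<and>
     (\<forall>A\<in>sets S. \<forall>B\<in>sets T.
        prob ((Z -` A \<inter> space M) \<inter> (Y -` B \<inter> space M)) = prob (Z -` A \<inter> space M) * prob (Y -` B \<inter> space M))"

lemma (in prob_space) indep_var_imp_indep_rv_pair:
  assumes "indep_var S Z T Y"
  shows "indep_rv_pair S Z T Y"
  unfolding indep_rv_pair_def
proof (intro conjI ballI)
  show "random_variable S Z" "random_variable T Y"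
    using indep_var_rv1[OF assms] indep_var_rv2[OF assms] by auto
  fix A B
  assume "A \<in> sets S" "B \<in> sets T"
  from indep_varD[OF assms this]
  show "prob ((Z -` A \<inter> space M) \<inter> (Y -` B \<inter> space M)) = prob (Z -` A \<inter> space M) * prob (Y -` B \<inter> space M)"
    by (simp add: vimage_def Int_def conj_commute conj_left_commute)
qed

lemma (in prob_space) indep_rv_pair_compose:
  assumes indep: "indep_rv_pair S Z T Y" and h: "h \<in> measurable T T'"
  shows "indep_rv_pair S Z T' (\<lambda>\<omega>. h (Y \<omega>))"
  unfolding indep_rv_pair_def
proof (intro conjI ballI)
  have Y: "random_variable T Y"
    using indep unfolding indep_rv_pair_def by auto
  show "random_variable S Z"
    using indep unfolding indep_rv_pair_def by auto
  show "random_variable T' (\<lambda>\<omega>. h (Y \<omega>))"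
    using Y h by (rule measurable_compose)
  fix A B
  assume A: "A \<in> sets S" and B: "B \<in> sets T'"
  have "(\<lambda>\<omega>. h (Y \<omega>)) -` B \<inter> space M = Y -` (h -` B \<inter> space T) \<inter> space M"
    using measurable_space[OF Y] by auto
  moreover have "h -` B \<inter> space T \<in> sets T"
    using h B by (rule measurable_sets)
  ultimately show "prob ((Z -` A \<inter> space M) \<inter> ((\<lambda>\<omega>. h (Y \<omega>)) -` B \<inter> space M))
      = prob (Z -` A \<inter> space M) * prob ((\<lambda>\<omega>. h (Y \<omega>)) -` B \<inter> space M)"
    using indep A unfolding indep_rv_pair_def by (simp only:)
qed

lemma (in prob_space) indep_rv_pair_distr_eq:
  assumes indep: "indep_rv_pair S Z T Y"
  shows "distr M S Z \<Otimes>\<^sub>M distr M T Y = distr M (S \<Otimes>\<^sub>M T) (\<lambda>\<omega>. (Z \<omega>, Y \<omega>))"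
proof -
  have Z: "random_variable S Z" and Y: "random_variable T Y"
    using indep unfolding indep_rv_pair_def by auto
  then have ZY: "random_variable (S \<Otimes>\<^sub>M T) (\<lambda>\<omega>. (Z \<omega>, Y \<omega>))"
    by (rule measurable_Pair)
  interpret Z: prob_space "distr M S Z"
    using Z by (rule prob_space_distr)
  interpret Y: prob_space "distr M T Y"
    using Y by (rule prob_space_distr)
  show ?thesis
  proof (rule pair_measure_eqI)
    show "sigma_finite_measure (distr M S Z)" "sigma_finite_measure (distr M T Y)" ..
    fix A B
    assume A: "A \<in> sets (distr M S Z)" and B: "B \<in> sets (distr M T Y)"
    have "emeasure (distr M (S \<Otimes>\<^sub>M T) (\<lambda>\<omega>. (Z \<omega>, Y \<omega>))) (A \<times> B)
        = emeasure M ((Z -` A \<inter> space M) \<inter> (Y -` B \<inter> space M))"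
      using A B by (subst emeasure_distr[OF ZY]) (auto intro!: arg_cong[where f="emeasure M"])
    also have "\<dots> = emeasure M (Z -` A \<inter> space M) * emeasure M (Y -` B \<inter> space M)"
      using indep A B unfolding indep_rv_pair_def by (simp add: emeasure_eq_measure measure_nonneg ennreal_mult)
    finally show "emeasure (distr M S Z) A * emeasure (distr M T Y) B
        = emeasure (distr M (S \<Otimes>\<^sub>M T) (\<lambda>\<omega>. (Z \<omega>, Y \<omega>))) (A \<times> B)"
      using Z Y A B by (simp add: emeasure_distr)
  qed simp
qed

lemma (in prob_space) integral_indep_rv_pair_eq_0:
  fixes f :: "'s \<times> 't \<Rightarrow> real"
  assumes indep: "indep_rv_pair S Z T Y" and f: "f \<in> borel_measurable (S \<Otimes>\<^sub>M T)"
    and fibre: "\<And>z. z \<in> space S \<Longrightarrow> (\<integral>y. f (z, y) \<partial>distr M T Y) = 0"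
  shows "(\<integral>\<omega>. f (Z \<omega>, Y \<omega>) \<partial>M) = 0"
proof -
  have Z: "random_variable S Z" and Y: "random_variable T Y"
    using indep unfolding indep_rv_pair_def by auto
  interpret Z: prob_space "distr M S Z"
    using Z by (rule prob_space_distr)
  interpret Y: prob_space "distr M T Y"
    using Y by (rule prob_space_distr)
  interpret ZY: pair_prob_space "distr M S Z" "distr M T Y" ..
  have "(\<integral>\<omega>. f (Z \<omega>, Y \<omega>) \<partial>M) = integral\<^sup>L (distr M (S \<Otimes>\<^sub>M T) (\<lambda>\<omega>. (Z \<omega>, Y \<omega>))) f"
    by (rule integral_distr[OF measurable_Pair[OF Z Y] f, symmetric])
  also have "\<dots> = integral\<^sup>L (distr M S Z \<Otimes>\<^sub>M distr M T Y) f"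
    by (simp only: indep_rv_pair_distr_eq[OF indep])
  also have "\<dots> = 0"
  proof (cases "integrable (distr M S Z \<Otimes>\<^sub>M distr M T Y) f")
    case True
    then have "integral\<^sup>L (distr M S Z \<Otimes>\<^sub>M distr M T Y) f = (\<integral>z. (\<integral>y. f (z, y) \<partial>distr M T Y) \<partial>distr M S Z)"
      by (rule ZY.integral_fst'[symmetric])
    also have "\<dots> = (\<integral>z. 0 \<partial>distr M S Z)"
      by (rule Bochner_Integration.integral_cong) (simp_all add: fibre)
    finally show ?thesis
      by simp
  qed (rule not_integrable_integral_eq)
  finally show ?thesis .
qed

lemma fedprox_local_cong:
  "(\<And>l. l < k \<Longrightarrow> xs l = ys l) \<Longrightarrow> fedprox_local \<alpha> \<gamma> Gi w0 xs k = fedprox_local \<alpha> \<gamma> Gi w0 ys k"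
  by (induction k) auto

locale fedprox_round =
  prob_space M + federated_objective "{..<C}" p F gF L \<mu> wstar wloc_star
  for M :: "'w measure" and C :: nat and p :: "nat \<Rightarrow> real"
    and F :: "nat \<Rightarrow> 'v::euclidean_space \<Rightarrow> real" and gF L \<mu> wstar wloc_star +
  fixes N :: "'x measure" and E :: nat and G :: "nat \<Rightarrow> 'v \<Rightarrow> 'x \<Rightarrow> 'v"
    and \<xi> :: "nat \<Rightarrow> nat \<Rightarrow> 'w \<Rightarrow> 'x" and wbar0 :: "'w \<Rightarrow> 'v" and \<alpha> \<gamma> \<sigma> Gb :: real
    and w :: "nat \<Rightarrow> nat \<Rightarrow> 'w \<Rightarrow> 'v"
  assumes w_def: "w = (\<lambda>i k \<omega>. fedprox_local \<alpha> \<gamma> (G i) (wbar0 \<omega>) (\<lambda>k. \<xi> i k \<omega>) k)"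
    and alpha_pos: "0 < \<alpha>" and gamma_pos: "0 < \<gamma>" and gamma_L: "\<gamma> \<le> 1 / (2 * L)"
    and gamma_am: "\<gamma> * (\<alpha> + \<mu>) \<le> 1"
    and wbar0_meas: "wbar0 \<in> borel_measurable M"
    and xi_meas: "\<And>i k. i < C \<Longrightarrow> k < E \<Longrightarrow> \<xi> i k \<in> measurable M N"
    and G_meas: "\<And>i. i < C \<Longrightarrow> (\<lambda>(v, x). G i v x) \<in> borel_measurable (borel \<Otimes>\<^sub>M N)"
    and xi_indep: "indep_vars (\<lambda>_. N) (\<lambda>(i, k). \<xi> i k) ({..<C} \<times> {..<E})"
    and wbar0_indep: "indep_set
       (sigma_sets (space M) {wbar0 -` B \<inter> space M | B. B \<in> sets borel})
       (sigma_sets (space M) {(\<lambda>\<omega>. \<lambda>ik\<in>{..<C} \<times> {..<E}. \<xi> (fst ik) (snd ik) \<omega>) -` B \<inter> space M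
                                | B. B \<in> sets (Pi\<^sub>M ({..<C} \<times> {..<E}) (\<lambda>_. N))})"
    and wbar0_sq: "integrable M (\<lambda>\<omega>. (norm (wbar0 \<omega> - wstar))\<^sup>2)"
    and unbiased: "\<And>i k v. i < C \<Longrightarrow> k < E \<Longrightarrow>
       integrable M (\<lambda>\<omega>. G i v (\<xi> i k \<omega>)) \<and> (\<integral>\<omega>. G i v (\<xi> i k \<omega>) \<partial>M) = gF i v"
    and variance: "\<And>i k. i < C \<Longrightarrow> k < E \<Longrightarrow>
       integrable M (\<lambda>\<omega>. (norm (G i (w i k \<omega>) (\<xi> i k \<omega>) - gF i (w i k \<omega>)))\<^sup>2) \<and>
       (\<integral>\<omega>. (norm (G i (w i k \<omega>) (\<xi> i k \<omega>) - gF i (w i k \<omega>)))\<^sup>2 \<partial>M) \<le> \<sigma>\<^sup>2"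
    and second_moment: "\<And>i k. i < C \<Longrightarrow> k < E \<Longrightarrow>
       integrable M (\<lambda>\<omega>. (norm (G i (w i k \<omega>) (\<xi> i k \<omega>)))\<^sup>2) \<and>
       (\<integral>\<omega>. (norm (G i (w i k \<omega>) (\<xi> i k \<omega>)))\<^sup>2 \<partial>M) \<le> Gb\<^sup>2"
begin

abbreviation client_steps :: "(nat \<times> nat) set" where
  "client_steps \<equiv> {..<C} \<times> {..<E}"

abbreviation sample_space :: "(nat \<times> nat \<Rightarrow> 'x) measure" where
  "sample_space \<equiv> Pi\<^sub>M client_steps (\<lambda>_. N)"

definition samples :: "'w \<Rightarrow> nat \<times> nat \<Rightarrow> 'x" where
  "samples \<omega> = (\<lambda>ik\<in>client_steps. \<xi> (fst ik) (snd ik) \<omega>)"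

definition iterate :: "nat \<Rightarrow> nat \<Rightarrow> 'v \<Rightarrow> (nat \<times> nat \<Rightarrow> 'x) \<Rightarrow> 'v" where
  "iterate i k v \<Xi> = fedprox_local \<alpha> \<gamma> (G i) v (\<lambda>l. \<Xi> (i, l)) k"

definition grad_sample :: "nat \<Rightarrow> nat \<Rightarrow> 'w \<Rightarrow> 'v" where
  "grad_sample i k \<omega> = G i (w i k \<omega>) (\<xi> i k \<omega>)"

definition noise :: "nat \<Rightarrow> nat \<Rightarrow> 'w \<Rightarrow> 'v" where
  "noise i k \<omega> = grad_sample i k \<omega> - gF i (w i k \<omega>)"

definition wmean :: "nat \<Rightarrow> 'w \<Rightarrow> 'v" where
  "wmean k \<omega> = (\<Sum>i<C. p i *\<^sub>R w i k \<omega>)"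

lemma w_0: "w i 0 \<omega> = wbar0 \<omega>"
  by (simp add: w_def)

lemma w_Suc: "w i (Suc k) \<omega> = (1 - \<alpha> * \<gamma>) *\<^sub>R w i k \<omega> + (\<alpha> * \<gamma>) *\<^sub>R wbar0 \<omega> - \<gamma> *\<^sub>R grad_sample i k \<omega>"
  unfolding grad_sample_def by (simp add: w_def)

lemma wmean_0: "wmean 0 \<omega> = wbar0 \<omega>"
  using p_sum by (simp add: wmean_def w_0 flip: scaleR_sum_left)

lemma w_eq_iterate: "j < C \<Longrightarrow> l \<le> E \<Longrightarrow> w j l \<omega> = iterate j l (wbar0 \<omega>) (samples \<omega>)"
  unfolding w_def iterate_def samples_def by (auto intro: fedprox_local_cong)

lemma iterate_upd: "l \<le> k \<Longrightarrow> iterate j l v (\<Xi>((i, k) := y)) = iterate j l v \<Xi>"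
  unfolding iterate_def by (auto intro: fedprox_local_cong)

lemma alpha_gamma_bounds: "0 \<le> \<alpha> * \<gamma>" "\<alpha> * \<gamma> \<le> 1"
  using alpha_pos gamma_pos gamma_am mu_nonneg
  by (auto simp: algebra_simps intro: order_trans[OF _ gamma_am])

lemma G_measurable:
  assumes "i < C" and "f \<in> borel_measurable K" and "h \<in> measurable K N"
  shows "(\<lambda>z. G i (f z) (h z)) \<in> borel_measurable K"
  using measurable_compose[OF measurable_Pair[OF assms(2,3)] G_meas[OF assms(1)]] by simp

lemma gF_measurable:
  assumes "i < C" and "f \<in> borel_measurable K"
  shows "(\<lambda>z. gF i (f z)) \<in> borel_measurable K"
proof -
  have "L-lipschitz_on UNIV (gF i)"
    using smooth[of i] assms(1) L_pos unfolding L_smooth_def by (intro lipschitz_onI) (auto simp: dist_norm)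
  then have "gF i \<in> borel_measurable borel"
    by (intro borel_measurable_continuous_onI lipschitz_on_continuous_on)
  then show ?thesis
    using assms(2) by (rule measurable_compose[rotated])
qed

lemma samples_measurable: "samples \<in> measurable M sample_space"
  unfolding samples_def by (rule measurable_restrict) (auto intro: xi_meas)

lemma iterate_measurable:
  "j < C \<Longrightarrow> l \<le> E \<Longrightarrow> (\<lambda>q. iterate j l (fst q) (snd q)) \<in> borel_measurable (borel \<Otimes>\<^sub>M sample_space)"
proof (induction l)
  case (Suc l)
  have "(\<lambda>q. snd q (j, l)) \<in> measurable (borel \<Otimes>\<^sub>M sample_space) N"
    using Suc.prems by (auto intro!: measurable_compose[OF measurable_snd measurable_component_singleton])
  then have "(\<lambda>q. G j (iterate j l (fst q) (snd q)) (snd q (j, l))) \<in> borel_measurable (borel \<Otimes>\<^sub>M sample_space)"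
    using Suc by (intro G_measurable) auto
  then show ?case
    using Suc by (simp add: iterate_def)
qed (simp add: iterate_def)

lemma w_measurable: "i < C \<Longrightarrow> k \<le> E \<Longrightarrow> w i k \<in> borel_measurable M"
  using measurable_compose[OF measurable_Pair[OF wbar0_meas samples_measurable] iterate_measurable]
  by (simp add: w_eq_iterate cong: measurable_cong)

lemma grad_sample_measurable: "i < C \<Longrightarrow> k < E \<Longrightarrow> grad_sample i k \<in> borel_measurable M"
  unfolding grad_sample_def by (intro G_measurable w_measurable xi_meas) auto

lemma square_integrable_grad_sample: "i < C \<Longrightarrow> k < E \<Longrightarrow> square_integrable M (grad_sample i k)"
  unfolding square_integrable_def using grad_sample_measurable second_moment
  by (simp add: grad_sample_def)

lemma square_integrable_wbar0: "square_integrable M (\<lambda>\<omega>. wbar0 \<omega> - wstar)"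
  unfolding square_integrable_def using wbar0_sq wbar0_meas by simp

lemma square_integrable_drift: "i < C \<Longrightarrow> k \<le> E \<Longrightarrow> square_integrable M (\<lambda>\<omega>. w i k \<omega> - wbar0 \<omega>)"
proof (induction k)
  case 0
  then show ?case
    using square_integrable_const[of M 0] by (simp add: w_0 finite_measure_axioms)
next
  case (Suc k)
  have "w i (Suc k) \<omega> - wbar0 \<omega> = (1 - \<alpha> * \<gamma>) *\<^sub>R (w i k \<omega> - wbar0 \<omega>) - \<gamma> *\<^sub>R grad_sample i k \<omega>" for \<omega>
    by (simp add: w_Suc algebra_simps)
  then show ?case
    using Suc by (simp add: square_integrable_diff square_integrable_scaleR square_integrable_grad_sample)
qed

lemma square_integrable_w: "i < C \<Longrightarrow> k \<le> E \<Longrightarrow> square_integrable M (\<lambda>\<omega>. w i k \<omega> - wstar)"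
  using square_integrable_add[OF square_integrable_drift square_integrable_wbar0] by simp

lemma square_integrable_grad: "i < C \<Longrightarrow> k \<le> E \<Longrightarrow> square_integrable M (\<lambda>\<omega>. gF i (w i k \<omega>))"
proof -
  assume i: "i < C" and k: "k \<le> E"
  have "square_integrable M (\<lambda>\<omega>. gF i (w i k \<omega>) - gF i wstar)"
  proof (rule square_integrable_dominated)
    show "square_integrable M (\<lambda>\<omega>. L *\<^sub>R (w i k \<omega> - wstar))"
      using i k by (intro square_integrable_scaleR square_integrable_w)
    show "(\<lambda>\<omega>. gF i (w i k \<omega>) - gF i wstar) \<in> borel_measurable M"
      using i k by (intro borel_measurable_diff gF_measurable w_measurable) auto
    show "norm (gF i (w i k \<omega>) - gF i wstar) \<le> norm (L *\<^sub>R (w i k \<omega> - wstar))" for \<omega>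
      using smooth[of i] i L_pos unfolding L_smooth_def by simp
  qed
  from square_integrable_add[OF this square_integrable_const[OF finite_measure_axioms, of "gF i wstar"]]
  show ?thesis
    by simp
qed

lemma square_integrable_noise: "i < C \<Longrightarrow> k < E \<Longrightarrow> square_integrable M (noise i k)"
  unfolding noise_def
  using square_integrable_diff[OF square_integrable_grad_sample square_integrable_grad] by simp

lemma square_integrable_wmean: "k \<le> E \<Longrightarrow> square_integrable M (\<lambda>\<omega>. wmean k \<omega> - wstar)"
proof -
  assume k: "k \<le> E"
  have "wmean k \<omega> - wstar = (\<Sum>i<C. p i *\<^sub>R (w i k \<omega> - wstar))" for \<omega>
    using p_sum by (simp add: wmean_def scaleR_diff_right sum_subtractf flip: scaleR_sum_left)
  then show ?thesis
    using k by (auto intro!: square_integrable_sum[OF finite_measure_axioms] square_integrable_scaleR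
        square_integrable_w)
qed

lemma wbar0_samples_indep: "indep_rv_pair borel wbar0 sample_space samples"
  unfolding indep_rv_pair_def
proof (intro conjI ballI)
  show "random_variable borel wbar0" "random_variable sample_space samples"
    by (fact wbar0_meas samples_measurable)+
  fix A :: "'v set" and B :: "(nat \<times> nat \<Rightarrow> 'x) set"
  assume "A \<in> sets borel" "B \<in> sets sample_space"
  then have "wbar0 -` A \<inter> space M \<in> sigma_sets (space M) {wbar0 -` B \<inter> space M | B. B \<in> sets borel}"
    and "samples -` B \<inter> space M \<in> sigma_sets (space M) {(\<lambda>\<omega>. \<lambda>ik\<in>client_steps. \<xi> (fst ik) (snd ik) \<omega>) -` B \<inter> space M
                                | B. B \<in> sets sample_space}"
    unfolding samples_def by (auto intro: sigma_sets.Basic)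
  then show "prob ((wbar0 -` A \<inter> space M) \<inter> (samples -` B \<inter> space M))
      = prob (wbar0 -` A \<inter> space M) * prob (samples -` B \<inter> space M)"
    using wbar0_indep unfolding indep_sets2_eq by blast
qed

lemma sample_indep_others:
  assumes "(i, k) \<in> client_steps"
  shows "indep_rv_pair (Pi\<^sub>M (client_steps - {(i, k)}) (\<lambda>_. N)) (\<lambda>\<omega>. \<lambda>j\<in>client_steps - {(i, k)}. \<xi> (fst j) (snd j) \<omega>)
    N (\<xi> i k)"
proof -
  have "indep_var (Pi\<^sub>M (client_steps - {(i, k)}) (\<lambda>_. N)) (\<lambda>\<omega>. \<lambda>j\<in>client_steps - {(i, k)}. (\<lambda>(i, k). \<xi> i k) j \<omega>)
      (Pi\<^sub>M {(i, k)} (\<lambda>_. N)) (\<lambda>\<omega>. \<lambda>j\<in>{(i, k)}. (\<lambda>(i, k). \<xi> i k) j \<omega>)"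
    using assms by (intro indep_var_restrict[OF xi_indep]) auto
  from indep_rv_pair_compose[OF indep_var_imp_indep_rv_pair[OF this]
      measurable_component_singleton[of "(i, k)" "{(i, k)}" "\<lambda>_. N"]]
  show ?thesis
    by (simp add: case_prod_beta')
qed

lemma sample_gradient_noise_mean_zero:
  assumes "i < C" and "k < E"
  shows "(\<integral>y. c \<bullet> (G i u y - gF i u) \<partial>distr M N (\<xi> i k)) = 0"
proof -
  have \<xi>: "\<xi> i k \<in> measurable M N"
    using xi_meas assms by simp
  have Gu: "G i u \<in> borel_measurable N"
    using G_measurable[OF assms(1) measurable_const measurable_ident_sets[OF refl]] by simp
  interpret N\<xi>: prob_space "distr M N (\<xi> i k)"
    using \<xi> by (rule prob_space_distr)
  have "integrable (distr M N (\<xi> i k)) (G i u)" and "(\<integral>y. G i u y \<partial>distr M N (\<xi> i k)) = gF i u"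
    using unbiased[OF assms, of u] by (simp_all add: integrable_distr_eq[OF \<xi> Gu] integral_distr[OF \<xi> Gu])
  moreover have "N\<xi>.prob (space N) = 1"
    using N\<xi>.prob_space by simp
  ultimately show ?thesis
    by (simp add: inner_diff_right)
qed

text \<open>Freezing all samples but \<open>\<xi> i k\<close>: neither \<open>H\<close> nor the \<open>k\<close>-th local iterate reads that
  sample, so the remaining integral vanishes by unbiasedness.\<close>

lemma sample_noise_orthogonal:
  fixes v :: 'v
  assumes ik: "i < C" "k < E" and H: "H \<in> borel_measurable sample_space"
    and H_upd: "\<And>\<Xi> y. H (\<Xi>((i, k) := y)) = H \<Xi>"
  defines "\<phi> \<equiv> \<lambda>\<Xi>. H \<Xi> \<bullet> (G i (iterate i k v \<Xi>) (\<Xi> (i, k)) - gF i (iterate i k v \<Xi>))"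
  shows "(\<integral>\<omega>. \<phi> (samples \<omega>) \<partial>M) = 0"
proof -
  define J where "J = client_steps - {(i, k)}"
  define upd where "upd = (\<lambda>(\<Xi>, y). \<Xi>((i, k) := y) :: nat \<times> nat \<Rightarrow> 'x)"
  have upd: "upd \<in> measurable (Pi\<^sub>M J (\<lambda>_. N) \<Otimes>\<^sub>M N) sample_space"
    using measurable_add_dim[of "(i, k)" J "\<lambda>_. N"] ik unfolding upd_def J_def
    by (simp add: insert_absorb)
  have "(\<lambda>q. iterate i k v (upd q)) \<in> borel_measurable (Pi\<^sub>M J (\<lambda>_. N) \<Otimes>\<^sub>M N)"
    using measurable_compose[OF measurable_Pair[OF measurable_const upd] iterate_measurable[of i k]] ik by simp
  then have meas: "(\<lambda>q. \<phi> (upd q)) \<in> borel_measurable (Pi\<^sub>M J (\<lambda>_. N) \<Otimes>\<^sub>M N)"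
    unfolding \<phi>_def using ik measurable_compose[OF upd H]
    by (intro borel_measurable_inner borel_measurable_diff G_measurable gF_measurable)
       (auto simp: upd_def split_beta')
  have fibre: "(\<integral>y. \<phi> (upd (\<Xi>, y)) \<partial>distr M N (\<xi> i k)) = 0" for \<Xi>
    using sample_gradient_noise_mean_zero[OF ik, of "H \<Xi>" "iterate i k v \<Xi>"]
    unfolding \<phi>_def upd_def by (simp add: H_upd iterate_upd)
  have "samples \<omega> = upd (\<lambda>j\<in>J. \<xi> (fst j) (snd j) \<omega>, \<xi> i k \<omega>)" for \<omega>
    using ik unfolding samples_def upd_def J_def by (auto simp: fun_eq_iff)
  moreover have "(\<integral>\<omega>. \<phi> (upd (\<lambda>j\<in>J. \<xi> (fst j) (snd j) \<omega>, \<xi> i k \<omega>)) \<partial>M) = 0"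
    using ik unfolding J_def
    by (intro integral_indep_rv_pair_eq_0[OF sample_indep_others, where f = "\<lambda>q. \<phi> (upd q)"])
       (use meas fibre in \<open>simp_all add: J_def\<close>)
  ultimately show ?thesis
    by simp
qed

lemma noise_orthogonal:
  assumes ik: "i < C" "k < E"
    and H: "(\<lambda>q. H (fst q) (snd q)) \<in> borel_measurable (borel \<Otimes>\<^sub>M sample_space)"
    and H_upd: "\<And>v \<Xi> y. H v (\<Xi>((i, k) := y)) = H v \<Xi>"
  shows "(\<integral>\<omega>. H (wbar0 \<omega>) (samples \<omega>) \<bullet> noise i k \<omega> \<partial>M) = 0"
proof -
  define \<phi> where "\<phi> q = H (fst q) (snd q) \<bullet> (G i (iterate i k (fst q) (snd q)) (snd q (i, k))
      - gF i (iterate i k (fst q) (snd q)))" for q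
  have "(\<lambda>q. snd q (i, k)) \<in> measurable (borel \<Otimes>\<^sub>M sample_space) N"
    using ik by (auto intro!: measurable_compose[OF measurable_snd measurable_component_singleton])
  then have "\<phi> \<in> borel_measurable (borel \<Otimes>\<^sub>M sample_space)"
    unfolding \<phi>_def using ik H
    by (intro borel_measurable_inner borel_measurable_diff G_measurable gF_measurable iterate_measurable) auto
  moreover have "H (wbar0 \<omega>) (samples \<omega>) \<bullet> noise i k \<omega> = \<phi> (wbar0 \<omega>, samples \<omega>)" for \<omega>
    using ik unfolding \<phi>_def noise_def grad_sample_def by (simp add: w_eq_iterate samples_def)
  moreover have "(\<integral>\<Xi>. \<phi> (v, \<Xi>) \<partial>distr M sample_space samples) = 0" for v
  proof -
    have "(\<lambda>\<Xi>. \<phi> (v, \<Xi>)) \<in> borel_measurable sample_space"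
      using \<open>\<phi> \<in> _\<close> by measurable
    then have "(\<integral>\<Xi>. \<phi> (v, \<Xi>) \<partial>distr M sample_space samples) = (\<integral>\<omega>. \<phi> (v, samples \<omega>) \<partial>M)"
      by (rule integral_distr[OF samples_measurable])
    also have "\<dots> = 0"
    proof -
      have "H v \<in> borel_measurable sample_space"
        using measurable_compose[OF measurable_Pair1'[of v borel] H] by simp
      from sample_noise_orthogonal[where H = "H v", OF ik this H_upd]
      show ?thesis
        unfolding \<phi>_def by simp
    qed
    finally show ?thesis .
  qed
  ultimately show ?thesis
    using integral_indep_rv_pair_eq_0[OF wbar0_samples_indep] by simp
qed

definition exact_update :: "nat \<Rightarrow> 'w \<Rightarrow> 'v" where
  "exact_update k \<omega> = (1 - \<alpha> * \<gamma>) *\<^sub>R (wmean k \<omega> - wstar) + (\<alpha> * \<gamma>) *\<^sub>R (wbar0 \<omega> - wstar)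
     - \<gamma> *\<^sub>R (\<Sum>i<C. p i *\<^sub>R gF i (w i k \<omega>))"

definition mean_noise :: "nat \<Rightarrow> 'w \<Rightarrow> 'v" where
  "mean_noise k \<omega> = (\<Sum>i<C. p i *\<^sub>R noise i k \<omega>)"

lemma wmean_Suc: "wmean (Suc k) \<omega> - wstar = exact_update k \<omega> - \<gamma> *\<^sub>R mean_noise k \<omega>"
proof -
  have "wmean (Suc k) \<omega> = (\<Sum>i<C. (1 - \<alpha> * \<gamma>) *\<^sub>R (p i *\<^sub>R w i k \<omega>) + (p i * (\<alpha> * \<gamma>)) *\<^sub>R wbar0 \<omega>
      - \<gamma> *\<^sub>R (p i *\<^sub>R gF i (w i k \<omega>)) - \<gamma> *\<^sub>R (p i *\<^sub>R noise i k \<omega>))"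
    unfolding wmean_def w_Suc noise_def by (rule sum.cong) (simp_all add: algebra_simps)
  also have "\<dots> = (1 - \<alpha> * \<gamma>) *\<^sub>R wmean k \<omega> + (\<alpha> * \<gamma>) *\<^sub>R wbar0 \<omega>
      - \<gamma> *\<^sub>R (\<Sum>i<C. p i *\<^sub>R gF i (w i k \<omega>)) - \<gamma> *\<^sub>R mean_noise k \<omega>"
    using p_sum unfolding wmean_def mean_noise_def
    by (simp add: sum.distrib sum_subtractf scaleR_sum_right flip: scaleR_sum_left sum_distrib_right)
  finally show ?thesis
    unfolding exact_update_def by (simp add: algebra_simps)
qed

lemma exact_update_noise_orthogonal:
  assumes "i < C" "k < E"
  shows "(\<integral>\<omega>. exact_update k \<omega> \<bullet> noise i k \<omega> \<partial>M) = 0"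
proof -
  define H where "H v \<Xi> = (1 - \<alpha> * \<gamma>) *\<^sub>R ((\<Sum>j<C. p j *\<^sub>R iterate j k v \<Xi>) - wstar)
      + (\<alpha> * \<gamma>) *\<^sub>R (v - wstar) - \<gamma> *\<^sub>R (\<Sum>j<C. p j *\<^sub>R gF j (iterate j k v \<Xi>))" for v \<Xi>
  have "exact_update k \<omega> = H (wbar0 \<omega>) (samples \<omega>)" for \<omega>
    using assms unfolding exact_update_def H_def wmean_def by (simp add: w_eq_iterate)
  moreover have "(\<lambda>q. H (fst q) (snd q)) \<in> borel_measurable (borel \<Otimes>\<^sub>M sample_space)"
    unfolding H_def using assms
    by (intro borel_measurable_add borel_measurable_diff borel_measurable_scaleR borel_measurable_sum
        borel_measurable_const measurable_fst gF_measurable iterate_measurable) auto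
  moreover have "H v (\<Xi>((i, k) := y)) = H v \<Xi>" for v \<Xi> y
    unfolding H_def by (simp add: iterate_upd)
  ultimately show ?thesis
    using noise_orthogonal[OF assms] by simp
qed

lemma noise_noise_orthogonal:
  assumes "i < C" "j < C" "j \<noteq> i" "k < E"
  shows "(\<integral>\<omega>. noise j k \<omega> \<bullet> noise i k \<omega> \<partial>M) = 0"
proof -
  define H where "H v \<Xi> = G j (iterate j k v \<Xi>) (\<Xi> (j, k)) - gF j (iterate j k v \<Xi>)" for v \<Xi>
  have "noise j k \<omega> = H (wbar0 \<omega>) (samples \<omega>)" for \<omega>
    using assms unfolding noise_def grad_sample_def H_def by (simp add: w_eq_iterate samples_def)
  moreover have "(\<lambda>q. snd q (j, k)) \<in> measurable (borel \<Otimes>\<^sub>M sample_space) N"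
    using assms by (auto intro!: measurable_compose[OF measurable_snd measurable_component_singleton])
  then have "(\<lambda>q. H (fst q) (snd q)) \<in> borel_measurable (borel \<Otimes>\<^sub>M sample_space)"
    unfolding H_def using assms
    by (intro borel_measurable_diff G_measurable gF_measurable iterate_measurable) auto
  moreover have "H v (\<Xi>((i, k) := y)) = H v \<Xi>" for v \<Xi> y
    unfolding H_def using assms(3) by (simp add: iterate_upd)
  ultimately show ?thesis
    using noise_orthogonal[OF assms(1,4)] by simp
qed

lemma mean_noise_sq_bound:
  assumes "k < E"
  shows "(\<integral>\<omega>. (norm (mean_noise k \<omega>))\<^sup>2 \<partial>M) \<le> \<sigma>\<^sup>2 * (\<Sum>i<C. (p i)\<^sup>2)"
proof -
  have int: "integrable M (\<lambda>\<omega>. noise i k \<omega> \<bullet> noise j k \<omega>)" if "i < C" "j < C" for i j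
    using that assms by (intro square_integrable_inner square_integrable_noise)
  have "(\<integral>\<omega>. (norm (mean_noise k \<omega>))\<^sup>2 \<partial>M)
      = (\<integral>\<omega>. (\<Sum>i<C. \<Sum>j<C. p i * p j * (noise j k \<omega> \<bullet> noise i k \<omega>)) \<partial>M)"
    unfolding mean_noise_def power2_norm_eq_inner
    by (simp add: inner_sum_left inner_sum_right sum_distrib_left mult.assoc)
  also have "\<dots> = (\<Sum>i<C. (\<integral>\<omega>. (\<Sum>j<C. p i * p j * (noise j k \<omega> \<bullet> noise i k \<omega>)) \<partial>M))"
    using int by (intro Bochner_Integration.integral_sum Bochner_Integration.integrable_sum
        Bochner_Integration.integrable_mult_right) auto
  also have "\<dots> = (\<Sum>i<C. \<Sum>j<C. p i * p j * (\<integral>\<omega>. noise j k \<omega> \<bullet> noise i k \<omega> \<partial>M))"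
    using int by (intro sum.cong refl) (simp add: Bochner_Integration.integral_sum)
  also have "\<dots> = (\<Sum>i<C. (p i)\<^sup>2 * (\<integral>\<omega>. (norm (noise i k \<omega>))\<^sup>2 \<partial>M))"
  proof (rule sum.cong[OF refl])
    fix i
    assume "i \<in> {..<C}"
    then have "p i * p j * (\<integral>\<omega>. noise j k \<omega> \<bullet> noise i k \<omega> \<partial>M)
        = (if j = i then (p i)\<^sup>2 * (\<integral>\<omega>. (norm (noise i k \<omega>))\<^sup>2 \<partial>M) else 0)" if "j < C" for j
      using noise_noise_orthogonal[of i j k] that assms \<open>i \<in> {..<C}\<close>
      by (auto simp: dot_square_norm power2_eq_square)
    then have "(\<Sum>j<C. p i * p j * (\<integral>\<omega>. noise j k \<omega> \<bullet> noise i k \<omega> \<partial>M))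
        = (\<Sum>j<C. if j = i then (p i)\<^sup>2 * (\<integral>\<omega>. (norm (noise i k \<omega>))\<^sup>2 \<partial>M) else 0)"
      by (intro sum.cong) auto
    then show "(\<Sum>j<C. p i * p j * (\<integral>\<omega>. noise j k \<omega> \<bullet> noise i k \<omega> \<partial>M))
        = (p i)\<^sup>2 * (\<integral>\<omega>. (norm (noise i k \<omega>))\<^sup>2 \<partial>M)"
      using \<open>i \<in> {..<C}\<close> by simp
  qed
  also have "\<dots> \<le> (\<Sum>i<C. (p i)\<^sup>2 * \<sigma>\<^sup>2)"
    using variance assms by (intro sum_mono mult_left_mono) (auto simp: noise_def grad_sample_def)
  finally show ?thesis
    by (simp add: sum_distrib_left mult.commute)
qed

lemma drift_norm_le: "norm (w i k \<omega> - wbar0 \<omega>) \<le> \<gamma> * (\<Sum>j<k. norm (grad_sample i j \<omega>))"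
proof (induction k)
  case (Suc k)
  have "w i (Suc k) \<omega> - wbar0 \<omega> = (1 - \<alpha> * \<gamma>) *\<^sub>R (w i k \<omega> - wbar0 \<omega>) - \<gamma> *\<^sub>R grad_sample i k \<omega>"
    by (simp add: w_Suc algebra_simps)
  then have "norm (w i (Suc k) \<omega> - wbar0 \<omega>)
      \<le> norm ((1 - \<alpha> * \<gamma>) *\<^sub>R (w i k \<omega> - wbar0 \<omega>)) + norm (\<gamma> *\<^sub>R grad_sample i k \<omega>)"
    by (metis norm_triangle_ineq4)
  also have "\<dots> = (1 - \<alpha> * \<gamma>) * norm (w i k \<omega> - wbar0 \<omega>) + \<gamma> * norm (grad_sample i k \<omega>)"
    using alpha_gamma_bounds gamma_pos by simp
  also have "\<dots> \<le> norm (w i k \<omega> - wbar0 \<omega>) + \<gamma> * norm (grad_sample i k \<omega>)"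
    using alpha_gamma_bounds by (simp add: mult_left_le_one_le)
  finally show ?case
    using Suc by (simp add: algebra_simps)
qed (simp add: w_0)

lemma local_drift_bound:
  assumes "i < C" and "k \<le> E"
  shows "(\<integral>\<omega>. (norm (w i k \<omega> - wbar0 \<omega>))\<^sup>2 \<partial>M) \<le> \<gamma>\<^sup>2 * (real k)\<^sup>2 * Gb\<^sup>2"
proof -
  have g: "j < k \<Longrightarrow> integrable M (\<lambda>\<omega>. (norm (grad_sample i j \<omega>))\<^sup>2)" for j
    using square_integrable_grad_sample[of i j] assms unfolding square_integrable_def by simp
  have "(norm (w i k \<omega> - wbar0 \<omega>))\<^sup>2 \<le> \<gamma>\<^sup>2 * (\<Sum>j<k. norm (grad_sample i j \<omega>))\<^sup>2" for \<omega>
    using drift_norm_le[of i k \<omega>] gamma_pos by (simp add: power_mono power_mult_distrib flip: power_mult_distrib)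
  also have "\<dots> \<omega> \<le> \<gamma>\<^sup>2 * real k * (\<Sum>j<k. (norm (grad_sample i j \<omega>))\<^sup>2)" for \<omega>
    using mult_left_mono[OF sum_squared_le_sum_of_squares[of "\<lambda>j. norm (grad_sample i j \<omega>)" "{..<k}"],
        of "\<gamma>\<^sup>2"]
    by (simp add: algebra_simps)
  finally have "(\<integral>\<omega>. (norm (w i k \<omega> - wbar0 \<omega>))\<^sup>2 \<partial>M)
      \<le> (\<integral>\<omega>. \<gamma>\<^sup>2 * real k * (\<Sum>j<k. (norm (grad_sample i j \<omega>))\<^sup>2) \<partial>M)"
    using square_integrable_drift[OF assms] g unfolding square_integrable_def
    by (intro integral_mono) auto
  also have "\<dots> = \<gamma>\<^sup>2 * real k * (\<Sum>j<k. (\<integral>\<omega>. (norm (grad_sample i j \<omega>))\<^sup>2 \<partial>M))"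
    using g by (simp add: Bochner_Integration.integral_sum)
  also have "\<dots> \<le> \<gamma>\<^sup>2 * real k * (\<Sum>j<k. Gb\<^sup>2)"
    using second_moment[OF assms(1)] assms(2) by (intro mult_left_mono sum_mono) (auto simp: grad_sample_def)
  finally show ?thesis
    by (simp add: power2_eq_square)
qed

definition mean_sq_dist :: "nat \<Rightarrow> real" where
  "mean_sq_dist k = (\<integral>\<omega>. (norm (wmean k \<omega> - wstar))\<^sup>2 \<partial>M)"

lemma square_integrable_exact_update:
  assumes "k \<le> E"
  shows "square_integrable M (exact_update k)"
proof -
  have "square_integrable M (\<lambda>\<omega>. (1 - \<alpha> * \<gamma>) *\<^sub>R (wmean k \<omega> - wstar) + (\<alpha> * \<gamma>) *\<^sub>R (wbar0 \<omega> - wstar))"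
    using assms by (intro square_integrable_add square_integrable_scaleR square_integrable_wmean
        square_integrable_wbar0)
  moreover have "square_integrable M (\<lambda>\<omega>. \<gamma> *\<^sub>R (\<Sum>i<C. p i *\<^sub>R gF i (w i k \<omega>)))"
    using assms by (intro square_integrable_scaleR square_integrable_sum[OF finite_measure_axioms]
        square_integrable_grad) auto
  ultimately show ?thesis
    unfolding exact_update_def by (rule square_integrable_diff)
qed

lemma square_integrable_mean_noise: "k < E \<Longrightarrow> square_integrable M (mean_noise k)"
  unfolding mean_noise_def
  by (intro square_integrable_sum[OF finite_measure_axioms] square_integrable_scaleR square_integrable_noise) auto

lemma exact_update_sq_bound:
  assumes "k \<le> E"
  shows "(\<integral>\<omega>. (norm (exact_update k \<omega>))\<^sup>2 \<partial>M) \<le> \<alpha> * \<gamma> * mean_sq_dist 0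
     + (1 - \<gamma> * (\<alpha> + \<mu>)) * mean_sq_dist k + 6 * L * \<gamma>\<^sup>2 * heterogeneity + 5 * (\<gamma>\<^sup>2 * (real k)\<^sup>2 * Gb\<^sup>2)"
proof -
  have sq: "square_integrable M (exact_update k)"
    using assms by (rule square_integrable_exact_update)
  have int0: "integrable M (\<lambda>\<omega>. (norm (wbar0 \<omega> - wstar))\<^sup>2)"
    and intk: "integrable M (\<lambda>\<omega>. (norm (wmean k \<omega> - wstar))\<^sup>2)"
    and intd: "\<And>i. i < C \<Longrightarrow> integrable M (\<lambda>\<omega>. (norm (w i k \<omega> - wbar0 \<omega>))\<^sup>2)"
    using square_integrable_wbar0 square_integrable_wmean[OF assms] square_integrable_drift assms
    unfolding square_integrable_def by auto
  have "(norm (exact_update k \<omega>))\<^sup>2 \<le> \<alpha> * \<gamma> * (norm (wbar0 \<omega> - wstar))\<^sup>2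
      + (1 - \<gamma> * (\<alpha> + \<mu>)) * (norm (wmean k \<omega> - wstar))\<^sup>2 + 6 * L * \<gamma>\<^sup>2 * heterogeneity
      + 5 * (\<Sum>i<C. p i * (norm (w i k \<omega> - wbar0 \<omega>))\<^sup>2)" for \<omega>
    unfolding exact_update_def wmean_def
    using proximal_mean_step_bound[OF alpha_pos[THEN less_imp_le] gamma_pos gamma_L gamma_am] .
  then have "(\<integral>\<omega>. (norm (exact_update k \<omega>))\<^sup>2 \<partial>M) \<le> (\<integral>\<omega>. \<alpha> * \<gamma> * (norm (wbar0 \<omega> - wstar))\<^sup>2
      + (1 - \<gamma> * (\<alpha> + \<mu>)) * (norm (wmean k \<omega> - wstar))\<^sup>2 + 6 * L * \<gamma>\<^sup>2 * heterogeneity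
      + 5 * (\<Sum>i<C. p i * (norm (w i k \<omega> - wbar0 \<omega>))\<^sup>2) \<partial>M)"
    using sq int0 intk intd unfolding square_integrable_def
    by (intro integral_mono Bochner_Integration.integrable_add Bochner_Integration.integrable_mult_right
        Bochner_Integration.integrable_sum) auto
  also have "\<dots> = \<alpha> * \<gamma> * mean_sq_dist 0 + (1 - \<gamma> * (\<alpha> + \<mu>)) * mean_sq_dist k
      + 6 * L * \<gamma>\<^sup>2 * heterogeneity + 5 * (\<Sum>i<C. p i * (\<integral>\<omega>. (norm (w i k \<omega> - wbar0 \<omega>))\<^sup>2 \<partial>M))"
  proof -
    have "integrable M (\<lambda>\<omega>. p i * (norm (w i k \<omega> - wbar0 \<omega>))\<^sup>2)" if "i < C" for i
      using intd[OF that] by simp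
    moreover from this have "integrable M (\<lambda>\<omega>. \<Sum>i<C. p i * (norm (w i k \<omega> - wbar0 \<omega>))\<^sup>2)"
      by (intro Bochner_Integration.integrable_sum) auto
    ultimately show ?thesis
      using int0 intk by (simp add: mean_sq_dist_def wmean_0 Bochner_Integration.integral_sum prob_space)
  qed
  also have "(\<Sum>i<C. p i * (\<integral>\<omega>. (norm (w i k \<omega> - wbar0 \<omega>))\<^sup>2 \<partial>M)) \<le> (\<Sum>i<C. p i * (\<gamma>\<^sup>2 * (real k)\<^sup>2 * Gb\<^sup>2))"
    using local_drift_bound assms p_nonneg by (intro sum_mono mult_left_mono) auto
  also have "\<dots> = \<gamma>\<^sup>2 * (real k)\<^sup>2 * Gb\<^sup>2"
    using p_sum by (simp flip: sum_distrib_right)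
  finally show ?thesis
    by simp
qed

lemma mean_sq_dist_Suc_le:
  assumes "k < E"
  shows "mean_sq_dist (Suc k) \<le> \<alpha> * \<gamma> * mean_sq_dist 0 + (1 - \<gamma> * (\<alpha> + \<mu>)) * mean_sq_dist k
     + 6 * L * \<gamma>\<^sup>2 * heterogeneity + 5 * (\<gamma>\<^sup>2 * (real k)\<^sup>2 * Gb\<^sup>2) + \<gamma>\<^sup>2 * (\<sigma>\<^sup>2 * (\<Sum>i<C. (p i)\<^sup>2))"
proof -
  have U: "square_integrable M (exact_update k)" and V: "square_integrable M (mean_noise k)"
    using assms by (simp_all add: square_integrable_exact_update square_integrable_mean_noise)
  have UV: "integrable M (\<lambda>\<omega>. exact_update k \<omega> \<bullet> mean_noise k \<omega>)"
    and Ui: "\<And>i. i < C \<Longrightarrow> integrable M (\<lambda>\<omega>. exact_update k \<omega> \<bullet> noise i k \<omega>)"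
    using U V assms by (auto intro!: square_integrable_inner square_integrable_noise)
  have "(\<integral>\<omega>. exact_update k \<omega> \<bullet> mean_noise k \<omega> \<partial>M)
      = (\<Sum>i<C. p i * (\<integral>\<omega>. exact_update k \<omega> \<bullet> noise i k \<omega> \<partial>M))"
    using Ui by (simp add: mean_noise_def inner_sum_right Bochner_Integration.integral_sum)
  also have "\<dots> = 0"
    using exact_update_noise_orthogonal assms by simp
  finally have cross: "(\<integral>\<omega>. exact_update k \<omega> \<bullet> mean_noise k \<omega> \<partial>M) = 0" .
  have "(norm (wmean (Suc k) \<omega> - wstar))\<^sup>2
      = (norm (exact_update k \<omega>))\<^sup>2 - 2 * \<gamma> * (exact_update k \<omega> \<bullet> mean_noise k \<omega>) + \<gamma>\<^sup>2 * (norm (mean_noise k \<omega>))\<^sup>2" for \<omega>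
    unfolding wmean_Suc norm_diff_square by (simp add: power_mult_distrib)
  then have "mean_sq_dist (Suc k) = (\<integral>\<omega>. (norm (exact_update k \<omega>))\<^sup>2 \<partial>M) + \<gamma>\<^sup>2 * (\<integral>\<omega>. (norm (mean_noise k \<omega>))\<^sup>2 \<partial>M)"
    using U V UV cross unfolding mean_sq_dist_def square_integrable_def by simp
  also have "\<gamma>\<^sup>2 * (\<integral>\<omega>. (norm (mean_noise k \<omega>))\<^sup>2 \<partial>M) \<le> \<gamma>\<^sup>2 * (\<sigma>\<^sup>2 * (\<Sum>i<C. (p i)\<^sup>2))"
    using mean_noise_sq_bound[OF assms] by (simp add: mult_left_mono)
  finally show ?thesis
    using exact_update_sq_bound[of k] assms by simp
qed

lemma mean_sq_dist_le:
  defines "r \<equiv> 1 - \<gamma> * (\<alpha> + \<mu>)"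
    and "B \<equiv> 6 * L * \<gamma>\<^sup>2 * heterogeneity + 5 * (\<gamma>\<^sup>2 * (real E)\<^sup>2 * Gb\<^sup>2) + \<gamma>\<^sup>2 * (\<sigma>\<^sup>2 * (\<Sum>i<C. (p i)\<^sup>2))"
  shows "k \<le> E \<Longrightarrow> mean_sq_dist k \<le> (\<alpha> + \<mu> * r ^ k) / (\<alpha> + \<mu>) * mean_sq_dist 0 + real k * B"
proof (induction k)
  case 0
  then show ?case
    using alpha_pos mu_nonneg by simp
next
  case (Suc k)
  have r: "0 \<le> r" "r \<le> 1"
    unfolding r_def using gamma_am gamma_pos alpha_pos mu_nonneg by simp_all
  have B: "0 \<le> B"
    unfolding B_def using L_pos heterogeneity_nonneg by (intro add_nonneg_nonneg mult_nonneg_nonneg sum_nonneg) auto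
  have "5 * (\<gamma>\<^sup>2 * (real k)\<^sup>2 * Gb\<^sup>2) \<le> 5 * (\<gamma>\<^sup>2 * (real E)\<^sup>2 * Gb\<^sup>2)"
    using Suc.prems by (intro mult_left_mono mult_right_mono power_mono) auto
  then have "mean_sq_dist (Suc k) \<le> \<alpha> * \<gamma> * mean_sq_dist 0 + r * mean_sq_dist k + B"
    using mean_sq_dist_Suc_le[of k] Suc.prems unfolding r_def B_def by simp
  also have "\<dots> \<le> \<alpha> * \<gamma> * mean_sq_dist 0 + r * ((\<alpha> + \<mu> * r ^ k) / (\<alpha> + \<mu>) * mean_sq_dist 0 + real k * B) + B"
    using Suc r by (simp add: mult_left_mono)
  also have "\<dots> = (\<alpha> + \<mu> * r ^ Suc k) / (\<alpha> + \<mu>) * mean_sq_dist 0 + (r * real k + 1) * B"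
    using alpha_pos mu_nonneg unfolding r_def by (simp add: field_simps)
  also have "\<dots> \<le> (\<alpha> + \<mu> * r ^ Suc k) / (\<alpha> + \<mu>) * mean_sq_dist 0 + real (Suc k) * B"
    using r B by (simp add: mult_right_mono mult_left_le_one_le)
  finally show ?case .
qed

lemma mean_sq_dist_round_bound:
  "mean_sq_dist E \<le> (\<alpha> + \<mu> * (1 - \<gamma> * (\<alpha> + \<mu>)) ^ E) / (\<alpha> + \<mu>) * mean_sq_dist 0
     + (\<gamma>\<^sup>2 * real E * \<sigma>\<^sup>2 * (\<Sum>i<C. (p i)\<^sup>2) + 6 * \<gamma>\<^sup>2 * L * real E * heterogeneity + 8 * \<gamma>\<^sup>2 * real E ^ 3 * Gb\<^sup>2)"
proof -
  have "0 \<le> \<gamma>\<^sup>2 * real E ^ 3 * Gb\<^sup>2"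
    by simp
  then show ?thesis
    using mean_sq_dist_le[of E] by (simp add: algebra_simps power2_eq_square power3_eq_cube)
qed

end

lemma proximal_contraction_le:
  fixes \<alpha> \<gamma> \<mu> :: real
  assumes "0 < \<alpha>" "0 < \<mu>" "0 < \<gamma>" "\<gamma> * (\<alpha> + \<mu>) \<le> 1" "1 \<le> E"
  shows "(\<alpha> + \<mu> * (1 - \<gamma> * (\<alpha> + \<mu>)) ^ E) / (\<alpha> + \<mu>) \<le> 1 - \<gamma> * \<mu>"
proof -
  have "(1 - \<gamma> * (\<alpha> + \<mu>)) ^ E \<le> (1 - \<gamma> * (\<alpha> + \<mu>)) ^ 1"
    using assms by (intro power_decreasing) auto
  then have "\<mu> * (1 - \<gamma> * (\<alpha> + \<mu>)) ^ E \<le> \<mu> * (1 - \<gamma> * (\<alpha> + \<mu>))"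
    using assms(2) by (simp add: mult_left_mono)
  then have "\<alpha> + \<mu> * (1 - \<gamma> * (\<alpha> + \<mu>)) ^ E \<le> (1 - \<gamma> * \<mu>) * (\<alpha> + \<mu>)"
    using assms(2) by (simp add: algebra_simps)
  then show ?thesis
    using assms(1,2) by (simp add: divide_le_eq)
qed

theorem lemma4:
  fixes M :: "'\<omega> measure" and N :: "'x measure"
    and C E :: nat and p :: "nat \<Rightarrow> real"
    and F :: "nat \<Rightarrow> 'v::euclidean_space \<Rightarrow> real" and gF :: "nat \<Rightarrow> 'v \<Rightarrow> 'v"
    and G :: "nat \<Rightarrow> 'v \<Rightarrow> 'x \<Rightarrow> 'v"
    and \<xi> :: "nat \<Rightarrow> nat \<Rightarrow> '\<omega> \<Rightarrow> 'x"
    and wbar0 :: "'\<omega> \<Rightarrow> 'v"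
    and \<alpha> \<gamma> L \<mu> \<sigma> Gb :: real
    and wstar :: 'v and wloc_star :: "nat \<Rightarrow> 'v"
  defines "w \<equiv> \<lambda>i k \<omega>. fedprox_local \<alpha> \<gamma> (G i) (wbar0 \<omega>) (\<lambda>k. \<xi> i k \<omega>) k"
    and "wbar_next \<equiv> \<lambda>\<omega>. \<Sum>i<C. p i *\<^sub>R fedprox_local \<alpha> \<gamma> (G i) (wbar0 \<omega>) (\<lambda>k. \<xi> i k \<omega>) E"
    and "Fglob \<equiv> \<lambda>x. \<Sum>i<C. p i * F i x"
    and "\<kappa> \<equiv> (\<alpha> + \<mu> * (1 - \<gamma> * (\<alpha> + \<mu>)) ^ E) / (\<alpha> + \<mu>)"
    and "A \<equiv> \<gamma>\<^sup>2 * E * \<sigma>\<^sup>2 * (\<Sum>i<C. (p i)\<^sup>2) + 6 * \<gamma>\<^sup>2 * L * E * ((\<Sum>i<C. p i * F i wstar) - (\<Sum>i<C. p i * F i (wloc_star i))) + 8 * \<gamma>\<^sup>2 * E ^ 3 * Gb\<^sup>2"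
  assumes M: "prob_space M"
    \<comment> \<open>client weights\<close>
    and p_nonneg: "\<And>i. i < C \<Longrightarrow> p i \<ge> 0" and p_sum: "(\<Sum>i<C. p i) = 1"
    \<comment> \<open>algorithm parameters\<close>
    and E_pos: "E \<ge> 1" and alpha_pos: "\<alpha> > 0" and mu_pos: "\<mu> > 0"
    and gamma_pos: "\<gamma> > 0" and gamma_L: "\<gamma> \<le> 1 / (2 * L)" and gamma_am: "\<gamma> \<le> 1 / (\<alpha> + \<mu>)"
    \<comment> \<open>L-smoothness and mu-strong convexity of every local objective\<close>
    and smooth: "\<And>i. i < C \<Longrightarrow> L_smooth L (F i) (gF i)"
    and strconv: "\<And>i. i < C \<Longrightarrow> strongly_convex \<mu> (F i)"
    \<comment> \<open>minimisers\<close>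
    and wstar_min: "\<And>x. Fglob wstar \<le> Fglob x"
    and wloc_star_min: "\<And>i x. i < C \<Longrightarrow> F i (wloc_star i) \<le> F i x"
    \<comment> \<open>randomness: start-of-round model and the samples of the round, all independent\<close>
    and wbar0_meas: "wbar0 \<in> borel_measurable M"
    and xi_meas: "\<And>i k. i < C \<Longrightarrow> k < E \<Longrightarrow> \<xi> i k \<in> measurable M N"
    and G_meas: "\<And>i. i < C \<Longrightarrow> (\<lambda>(v, x). G i v x) \<in> borel_measurable (borel \<Otimes>\<^sub>M N)"
    and xi_indep: "prob_space.indep_vars M (\<lambda>_. N) (\<lambda>(i, k). \<xi> i k) ({..<C} \<times> {..<E})"
    and wbar0_indep: "prob_space.indep_set M
       (sigma_sets (space M) {wbar0 -` B \<inter> space M | B. B \<in> sets borel})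
       (sigma_sets (space M) {(\<lambda>\<omega>. \<lambda>ik\<in>{..<C} \<times> {..<E}. \<xi> (fst ik) (snd ik) \<omega>) -` B \<inter> space M
                                | B. B \<in> sets (Pi\<^sub>M ({..<C} \<times> {..<E}) (\<lambda>_. N))})"
    and wbar0_sq: "integrable M (\<lambda>\<omega>. (norm (wbar0 \<omega> - wstar))\<^sup>2)"
    \<comment> \<open>unbiasedness of the stochastic gradient oracle\<close>
    and unbiased: "\<And>i k v. i < C \<Longrightarrow> k < E \<Longrightarrow>
       integrable M (\<lambda>\<omega>. G i v (\<xi> i k \<omega>)) \<and> (\<integral>\<omega>. G i v (\<xi> i k \<omega>) \<partial>M) = gF i v"
    \<comment> \<open>bounded variance at the iterates\<close>
    and variance: "\<And>i k. i < C \<Longrightarrow> k < E \<Longrightarrow>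
       integrable M (\<lambda>\<omega>. (norm (G i (w i k \<omega>) (\<xi> i k \<omega>) - gF i (w i k \<omega>)))\<^sup>2) \<and>
       (\<integral>\<omega>. (norm (G i (w i k \<omega>) (\<xi> i k \<omega>) - gF i (w i k \<omega>)))\<^sup>2 \<partial>M) \<le> \<sigma>\<^sup>2"
    \<comment> \<open>bounded second moment at the iterates\<close>
    and second_moment: "\<And>i k. i < C \<Longrightarrow> k < E \<Longrightarrow>
       integrable M (\<lambda>\<omega>. (norm (G i (w i k \<omega>) (\<xi> i k \<omega>)))\<^sup>2) \<and>
       (\<integral>\<omega>. (norm (G i (w i k \<omega>) (\<xi> i k \<omega>)))\<^sup>2 \<partial>M) \<le> Gb\<^sup>2"
  shows "(\<integral>\<omega>. (norm (wbar_next \<omega> - wstar))\<^sup>2 \<partial>M)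
           \<le> \<kappa> * (\<integral>\<omega>. (norm (wbar0 \<omega> - wstar))\<^sup>2 \<partial>M) + A
         \<and> \<kappa> \<le> 1 - \<gamma> * \<mu>"
proof -
  have "0 < 1 / (2 * L)"
    using gamma_pos gamma_L by linarith
  then have L_pos: "0 < L"
    by (simp add: zero_less_divide_iff)
  have step_size: "\<gamma> * (\<alpha> + \<mu>) \<le> 1"
    using gamma_am alpha_pos mu_pos by (simp add: field_simps)
  interpret fedprox_round M C p F gF L \<mu> wstar wloc_star N E G \<xi> wbar0 \<alpha> \<gamma> \<sigma> Gb w
    using M p_nonneg p_sum L_pos mu_pos smooth strconv wstar_min wloc_star_min alpha_pos gamma_pos gamma_L
      step_size wbar0_meas xi_meas G_meas xi_indep wbar0_indep wbar0_sq unbiased variance second_moment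
    unfolding fedprox_round_def fedprox_round_axioms_def federated_objective_def Fglob_def w_def
    by auto
  show ?thesis
    using mean_sq_dist_round_bound proximal_contraction_le[OF alpha_pos mu_pos gamma_pos step_size E_pos]
    unfolding mean_sq_dist_def wmean_def wmean_0[unfolded wmean_def] heterogeneity_def
    by (simp add: \<kappa>_def A_def wbar_next_def w_def)
qed

end
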